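(* Let $\mathcal{H}$ be a complex separable Hilbert space and $A\in\mathcal{B}(\mathcal{H})$ with a Riesz basis $\{e_j\}_{j\in J}$ of eigenvectors, $Ae_j=-\lambda_je_j$, where $\lambda_j\in\mathbb{C}_+$ for all $j$. Let $I$ be a countable index set and $g^i\in\mathcal{H}$ for $i\in I$, with expansions $g^i=\sum_j g^i_je_j$. Define $a^i:=\sum_j\frac{\sqrt2}{1+\lambda_j}g^i_je_j$ (equivalently $a^i=\sqrt2(I_{\mathcal{H}}-A)^{-1}g^i$) and $B:=(I_{\mathcal{H}}+A)(I_{\mathcal{H}}-A)^{-1}$, so that $Be_j=\mathfrak{h}(\lambda_j)e_j$. Then $\{e^{tA}g^i\}_{i\in I,\,t\in[0,\infty)}$ is a semi-continuous frame for $\mathcal{H}$ if and only if $\{B^na^i\}_{i\in I,\,n\in\mathbb{N}\cup\{0\}}$ is a frame for $\mathcal{H}$.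
   Context: A Riesz basis is a complete family $\{e_j\}$ for which there are $c,C>0$ with $c\sum|x_j|^2\le\|\sum x_je_j\|^2\le C\sum|x_j|^2$ for all finite sequences $(x_j)$. $\mathbb{C}_+=\{z:\mathrm{Re}\,z>0\}$, $\mathbb{D}=\{z:|z|<1\}$, $\mathfrak{h}(z)=\frac{1-z}{1+z}$ (a bijection $\mathbb{C}_+\leftrightarrow\mathbb{D}$); $I_{\mathcal{H}}$ is the identity. $e^{tA}:=\sum_{n\ge0}\frac{t^n}{n!}A^n$. A countable family $\{f_k\}\subset\mathcal{H}$ is a frame if there are $c,C>0$ with $c\|f\|^2\le\sum_k|\langle f,f_k\rangle|^2\le C\|f\|^2$ for all $f$. For a countable $\mathcal{G}\subset\mathcal{H}$ and an interval $\mathcal{T}\subset[0,\infty)$, $\{e^{tA}g\}_{g\in\mathcal{G},t\in\mathcal{T}}$ is a semi-continuous frame for $\mathcal{H}$ if there are constants $c,C>0$ such that $c\|f\|^2\le\sum_{g\in\mathcal{G}}\int_{\mathcal{T}}|\langle f,e^{tA}g\rangle|^2\,dt\le C\|f\|^2$ for all $f\in\mathcal{H}$. *)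

theory Defs
  imports "HOL-Analysis.Analysis"
begin

text \<open>A complex inner product space is encoded as a real inner product space
(real part of the complex inner product) equipped with a complex scalar
multiplication extending the real one, for which multiplication by i is an
isometry.\<close>

class complex_inner = real_inner +
  fixes scaleC :: "complex \<Rightarrow> 'a \<Rightarrow> 'a" (infixr \<open>*\<^sub>C\<close> 75)
  assumes scaleC_add_right: "a *\<^sub>C (x + y) = a *\<^sub>C x + a *\<^sub>C y"
    and scaleC_add_left: "(a + b) *\<^sub>C x = a *\<^sub>C x + b *\<^sub>C x"
    and scaleC_scaleC: "a *\<^sub>C (b *\<^sub>C x) = (a * b) *\<^sub>C x"
    and scaleC_of_real: "complex_of_real r *\<^sub>C x = r *\<^sub>R x"
    and inner_scaleC_ii: "inner (\<i> *\<^sub>C x) (\<i> *\<^sub>C y) = inner x y"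

class chilbert_space = complex_inner + complete_space

instantiation complex :: complex_inner
begin
definition scaleC_complex :: "complex \<Rightarrow> complex \<Rightarrow> complex" where
  "scaleC_complex a z = a * z"
instance
  by standard (auto simp: scaleC_complex_def algebra_simps inner_complex_def scaleR_conv_of_real)
end

instance complex :: chilbert_space ..

text \<open>The complex inner product, linear in the first argument.\<close>
definition cinner :: "'a::complex_inner \<Rightarrow> 'a \<Rightarrow> complex" where
  "cinner x y = Complex (inner x y) (inner x (\<i> *\<^sub>C y))"

definition bounded_clinear :: "('a::complex_inner \<Rightarrow> 'b::complex_inner) \<Rightarrow> bool" where
  "bounded_clinear T \<longleftrightarrow> bounded_linear T \<and> (\<forall>c x. T (c *\<^sub>C x) = c *\<^sub>C T x)"

definition cspan :: "'a::complex_inner set \<Rightarrow> 'a set" where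
  "cspan S = {\<Sum>x\<in>F. u x *\<^sub>C x | F u. finite F \<and> F \<subseteq> S}"

definition riesz_basis :: "('j \<Rightarrow> 'a::complex_inner) \<Rightarrow> bool" where
  "riesz_basis e \<longleftrightarrow> closure (cspan (range e)) = UNIV \<and>
     (\<exists>c C. c > 0 \<and> C > 0 \<and>
        (\<forall>(x::'j \<Rightarrow> complex) F. finite F \<longrightarrow>
           c * (\<Sum>j\<in>F. (cmod (x j))\<^sup>2) \<le> (norm (\<Sum>j\<in>F. x j *\<^sub>C e j))\<^sup>2 \<and>
           (norm (\<Sum>j\<in>F. x j *\<^sub>C e j))\<^sup>2 \<le> C * (\<Sum>j\<in>F. (cmod (x j))\<^sup>2)))"

definition exp_op :: "real \<Rightarrow> ('a::complex_inner \<Rightarrow> 'a) \<Rightarrow> 'a \<Rightarrow> 'a" where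
  "exp_op t A x = (\<Sum>n. (t ^ n / fact n) *\<^sub>R (A ^^ n) x)"

definition is_frame :: "('k \<Rightarrow> 'a::complex_inner) \<Rightarrow> 'k set \<Rightarrow> bool" where
  "is_frame f K \<longleftrightarrow> countable K \<and> (\<exists>c C. c > 0 \<and> C > 0 \<and> (\<forall>x.
     ennreal (c * (norm x)\<^sup>2) \<le> (\<integral>\<^sup>+ k. ennreal ((cmod (cinner x (f k)))\<^sup>2) \<partial>count_space K) \<and>
     (\<integral>\<^sup>+ k. ennreal ((cmod (cinner x (f k)))\<^sup>2) \<partial>count_space K) \<le> ennreal (C * (norm x)\<^sup>2)))"

definition semi_continuous_frame ::
    "('a::complex_inner \<Rightarrow> 'a) \<Rightarrow> ('i \<Rightarrow> 'a) \<Rightarrow> 'i set \<Rightarrow> real set \<Rightarrow> bool" where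
  "semi_continuous_frame A g I T \<longleftrightarrow> (\<exists>c C. c > 0 \<and> C > 0 \<and> (\<forall>f.
     ennreal (c * (norm f)\<^sup>2) \<le>
       (\<integral>\<^sup>+ i. (\<integral>\<^sup>+ t\<in>T. ennreal ((cmod (cinner f (exp_op t A (g i))))\<^sup>2) \<partial>lborel) \<partial>count_space I) \<and>
     (\<integral>\<^sup>+ i. (\<integral>\<^sup>+ t\<in>T. ennreal ((cmod (cinner f (exp_op t A (g i))))\<^sup>2) \<partial>lborel) \<partial>count_space I)
       \<le> ennreal (C * (norm f)\<^sup>2)))"

end

theory Submission
  imports Defs
begin

text \<open>For fixed f and y, the integral over t \<ge> 0 of |<f, exp(tA) y>|^2 equals the sum over n of
  |<f, B^n (sqrt 2 (I - A)^-1 y)>|^2; summing over y = g i identifies the two frame quadratic forms.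
  For a finite combination of eigenvectors both sides are the same finite sum of terms
  d j * cnj (d k) / (\<nu> j + cnj (\<nu> k)): on one side as the Laplace transform of
  exp (-t (\<nu> j + cnj (\<nu> k))), on the other as its expansion into a geometric series in the
  Cayley transforms. If Re (lam j) \<ge> \<delta> > 0 uniformly, both sides depend continuously on y by
  dominated convergence, and the identity extends from the dense set of combinations. In general
  one squeezes: shifting A to A - \<epsilon> I and rescaling B to r B with r < 1 both give generators
  with uniformly stable spectrum, and Fatou's lemma yields one inequality each.\<close>

section \<open>Complex inner product spaces\<close>

lemma scaleC_one [simp]: "(1::complex) *\<^sub>C x = x"
  using scaleC_of_real[of 1 x] by simp

lemma scaleC_scaleR_commute: "a *\<^sub>C (r *\<^sub>R x) = r *\<^sub>R (a *\<^sub>C x)"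
  by (metis mult.commute scaleC_of_real scaleC_scaleC)

lemma scaleC_ii_ii: "\<i> *\<^sub>C (\<i> *\<^sub>C x) = - (x::'a::complex_inner)"
proof -
  have "\<i> *\<^sub>C (\<i> *\<^sub>C x) = complex_of_real (-1) *\<^sub>C x" by (simp add: scaleC_scaleC)
  also have "\<dots> = - x" by (simp only: scaleC_of_real) simp
  finally show ?thesis .
qed

lemma inner_scaleC_ii_self: "inner x (\<i> *\<^sub>C (x::'a::complex_inner)) = 0"
proof -
  have "inner x (\<i> *\<^sub>C x) = inner (\<i> *\<^sub>C x) (\<i> *\<^sub>C (\<i> *\<^sub>C x))"
    by (simp add: inner_scaleC_ii)
  also have "\<dots> = - inner x (\<i> *\<^sub>C x)" by (simp add: scaleC_ii_ii inner_commute)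
  finally show ?thesis by simp
qed

lemma scaleC_eq_Re_Im: "a *\<^sub>C x = Re a *\<^sub>R x + Im a *\<^sub>R (\<i> *\<^sub>C (x::'a::complex_inner))"
proof -
  have "a = complex_of_real (Re a) + \<i> * complex_of_real (Im a)"
    by (simp add: complex_eq_iff)
  then have "a *\<^sub>C x = complex_of_real (Re a) *\<^sub>C x + \<i> *\<^sub>C (complex_of_real (Im a) *\<^sub>C x)"
    by (metis scaleC_add_left scaleC_scaleC)
  then show ?thesis by (simp add: scaleC_of_real scaleC_scaleR_commute)
qed

lemma norm_scaleC [simp]: "norm (a *\<^sub>C x) = cmod a * norm (x::'a::complex_inner)"
proof -
  define y where "y = \<i> *\<^sub>C x"
  have "(norm (a *\<^sub>C x))\<^sup>2 = inner (Re a *\<^sub>R x + Im a *\<^sub>R y) (Re a *\<^sub>R x + Im a *\<^sub>R y)"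
    unfolding scaleC_eq_Re_Im[of a x] y_def power2_norm_eq_inner ..
  also have "\<dots> = ((Re a)\<^sup>2 + (Im a)\<^sup>2) * inner x x"
    using inner_scaleC_ii_self[of x] inner_scaleC_ii[of x x]
    by (simp add: y_def inner_add_left inner_add_right inner_commute power2_eq_square algebra_simps)
  also have "\<dots> = (cmod a * norm x)\<^sup>2"
    by (simp add: cmod_def power_mult_distrib power2_norm_eq_inner)
  finally show ?thesis
    by (metis norm_ge_zero power2_eq_imp_eq mult_nonneg_nonneg)
qed

lemma bounded_linear_scaleC_right: "bounded_linear (\<lambda>x::'a::complex_inner. a *\<^sub>C x)"
  by (rule bounded_linear_intro[where K="cmod a"])
     (simp_all add: scaleC_add_right scaleC_scaleR_commute)

lemma bounded_linear_scaleC_left: "bounded_linear (\<lambda>a. a *\<^sub>C (x::'a::complex_inner))"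
proof (rule bounded_linear_intro[where K="norm x"])
  show "\<And>b c. (b + c) *\<^sub>C x = b *\<^sub>C x + c *\<^sub>C x" by (rule scaleC_add_left)
  show "\<And>r b. (r *\<^sub>R b) *\<^sub>C x = r *\<^sub>R (b *\<^sub>C x)"
    by (simp add: scaleR_conv_of_real scaleC_scaleC[symmetric] scaleC_of_real)
  show "\<And>b. norm (b *\<^sub>C x) \<le> norm b * norm x" by simp
qed

lemma scaleC_diff_right: "a *\<^sub>C (x - y) = a *\<^sub>C x - a *\<^sub>C (y::'a::complex_inner)"
  using linear_simps(2)[OF bounded_linear_scaleC_right] by blast

lemma scaleC_minus_left: "(- a) *\<^sub>C x = - (a *\<^sub>C (x::'a::complex_inner))"
  using linear_simps(4)[OF bounded_linear_scaleC_left] by blast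

lemma scaleC_diff_left: "(a - b) *\<^sub>C x = a *\<^sub>C x - b *\<^sub>C (x::'a::complex_inner)"
  using linear_simps(2)[OF bounded_linear_scaleC_left] by blast

lemma cinner_add_right: "cinner x (y + z) = cinner x y + cinner x z"
  by (simp add: cinner_def scaleC_add_right inner_add_right complex_eq_iff)

lemma cinner_scaleR_right: "cinner x (r *\<^sub>R y) = r *\<^sub>R cinner x y"
  by (simp add: cinner_def scaleC_scaleR_commute complex_eq_iff)

lemma cinner_scaleC_right: "cinner x (a *\<^sub>C y) = cnj a * cinner x y"
proof -
  have ii: "cinner x (\<i> *\<^sub>C y) = - \<i> * cinner x y"
    by (simp add: cinner_def scaleC_ii_ii complex_eq_iff)
  show ?thesis
    unfolding scaleC_eq_Re_Im[of a y]
    by (simp add: cinner_add_right cinner_scaleR_right ii scaleR_conv_of_real complex_eq_iff algebra_simps)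
qed

lemma norm_cinner_le: "cmod (cinner x y) \<le> norm x * norm y"
proof (cases "cinner x y = 0")
  case False
  define w where "w = cinner x y"
  define u where "u = w / complex_of_real (cmod w)"
  have w0: "cmod w \<noteq> 0" using False by (simp add: w_def)
  have "cnj u * w = (w * cnj w) / complex_of_real (cmod w)"
    by (simp add: u_def)
  also have "\<dots> = complex_of_real ((cmod w)\<^sup>2) / complex_of_real (cmod w)"
    by (simp only: complex_norm_square)
  finally have "cnj u * w = complex_of_real (cmod w)"
    using w0 by (simp add: power2_eq_square)
  then have "cmod w = inner x (u *\<^sub>C y)"
    by (metis Re_complex_of_real cinner_def cinner_scaleC_right complex.sel(1) w_def)
  also have "\<dots> \<le> norm x * norm (u *\<^sub>C y)" by (rule norm_cauchy_schwarz)
  finally show ?thesis using w0 by (simp add: w_def u_def norm_divide)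
qed simp

lemma bounded_linear_cinner_right: "bounded_linear (cinner x)"
  by (rule bounded_linear_intro[where K="norm x"])
     (simp_all add: cinner_add_right cinner_scaleR_right, metis norm_cinner_le mult.commute)

lemma cinner_sum_right: "cinner x (\<Sum>i\<in>S. f i) = (\<Sum>i\<in>S. cinner x (f i))"
  using real_vector.linear_sum[OF bounded_linear.linear[OF bounded_linear_cinner_right]] by blast

lemma tendsto_cinner_right:
  assumes "(X \<longlongrightarrow> y) F"
  shows "((\<lambda>n. cinner f (X n)) \<longlongrightarrow> cinner f y) F"
  using bounded_linear.tendsto[OF bounded_linear_cinner_right assms] .

lemma bounded_clinear_ident: "bounded_clinear (\<lambda>x. x)"
  by (simp add: bounded_clinear_def bounded_linear_ident)

lemma bounded_clinear_compose:
  "bounded_clinear S \<Longrightarrow> bounded_clinear T \<Longrightarrow> bounded_clinear (\<lambda>x. S (T x))"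
  unfolding bounded_clinear_def by (auto intro: bounded_linear_compose)

lemma bounded_clinear_add:
  "bounded_clinear S \<Longrightarrow> bounded_clinear T \<Longrightarrow> bounded_clinear (\<lambda>x. S x + T x)"
  unfolding bounded_clinear_def by (auto intro: bounded_linear_add simp: scaleC_add_right)

lemma bounded_clinear_diff:
  "bounded_clinear S \<Longrightarrow> bounded_clinear T \<Longrightarrow> bounded_clinear (\<lambda>x. S x - T x)"
  unfolding bounded_clinear_def by (auto intro: bounded_linear_sub simp: scaleC_diff_right)

lemma bounded_clinear_scaleC:
  "bounded_clinear T \<Longrightarrow> bounded_clinear (\<lambda>x. a *\<^sub>C T x)"
  unfolding bounded_clinear_def
  by (auto intro: bounded_linear_compose[OF bounded_linear_scaleC_right] simp: scaleC_scaleC mult.commute)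

lemma bounded_clinear_funpow:
  fixes T :: "'a::complex_inner \<Rightarrow> 'a"
  shows "bounded_clinear T \<Longrightarrow> bounded_clinear (T ^^ n)"
proof (induction n)
  case (Suc n)
  then show ?case using bounded_clinear_compose[of T "T ^^ n"] by (simp add: comp_def)
qed (simp add: id_def bounded_clinear_ident)

lemma bounded_clinear_bounded_linear: "bounded_clinear T \<Longrightarrow> bounded_linear T"
  by (simp add: bounded_clinear_def)

lemma bounded_clinear_scaleC_commute: "bounded_clinear T \<Longrightarrow> T (a *\<^sub>C x) = a *\<^sub>C T x"
  by (simp add: bounded_clinear_def)

lemma bounded_clinear_sum: "bounded_clinear T \<Longrightarrow> T (\<Sum>i\<in>S. f i) = (\<Sum>i\<in>S. T (f i))"
  by (simp add: bounded_clinear_def bounded_linear.linear real_vector.linear_sum)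

lemma bounded_clinear_pos_bound:
  assumes "bounded_clinear T"
  obtains K where "K > 0" "\<And>y. norm (T y) \<le> K * norm y"
  using bounded_linear.pos_bounded[OF bounded_clinear_bounded_linear[OF assms]]
  by (metis mult.commute)

section \<open>Operators diagonal in a Riesz basis\<close>

locale riesz_bounds =
  fixes e :: "'j \<Rightarrow> 'h::chilbert_space" and c C :: real
  assumes dense: "closure (cspan (range e)) = UNIV"
    and c_pos: "c > 0" and C_pos: "C > 0"
    and lower: "\<And>F x. finite F \<Longrightarrow> c * (\<Sum>j\<in>F. (cmod (x j))\<^sup>2) \<le> (norm (\<Sum>j\<in>F. x j *\<^sub>C e j))\<^sup>2"
    and upper: "\<And>F x. finite F \<Longrightarrow> (norm (\<Sum>j\<in>F. x j *\<^sub>C e j))\<^sup>2 \<le> C * (\<Sum>j\<in>F. (cmod (x j))\<^sup>2)"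
begin

lemma inj_basis: "inj e"
proof (rule injI, rule ccontr)
  fix j k assume ejk: "e j = e k" and ne: "j \<noteq> k"
  define x where "x = (\<lambda>i. if i = j then (1::complex) else if i = k then -1 else 0)"
  have "(\<Sum>i\<in>{j,k}. x i *\<^sub>C e i) = 0"
    using ne ejk by (simp add: x_def scaleC_minus_left)
  moreover have "(\<Sum>i\<in>{j,k}. (cmod (x i))\<^sup>2) = 2"
    using ne by (simp add: x_def)
  ultimately show False using lower[of "{j,k}" x] c_pos by simp
qed

lemma basis_nonzero: "e j \<noteq> 0"
  using lower[of "{j}" "\<lambda>_. 1"] c_pos by auto

definition combinations :: "'h set" where
  "combinations = {\<Sum>j\<in>F. x j *\<^sub>C e j | F x. finite F}"

lemma cspan_subset_combinations: "cspan (range e) \<subseteq> combinations"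
proof
  fix y assume "y \<in> cspan (range e)"
  then obtain F u where F: "finite F" "F \<subseteq> range e" and y: "y = (\<Sum>v\<in>F. u v *\<^sub>C v)"
    by (auto simp: cspan_def)
  define G where "G = inv e ` F"
  have eG: "e ` G = F"
    using F by (force simp: G_def f_inv_into_f)
  have "y = (\<Sum>j\<in>G. u (e j) *\<^sub>C e j)"
    using y eG sum.reindex[OF inj_on_subset[OF inj_basis subset_UNIV, of G]] by (simp add: comp_def)
  then show "y \<in> combinations"
    using F by (auto simp: combinations_def G_def)
qed

lemma mem_closed_superset_combinations:
  assumes "closed S" and "combinations \<subseteq> S"
  shows "y \<in> S"
proof -
  have "closure (cspan (range e)) \<subseteq> S"
    using assms cspan_subset_combinations by (intro closure_minimal) auto
  then show ?thesis using dense by auto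
qed

lemma combinations_approx_seq:
  obtains s where "\<And>n. s n \<in> combinations" "s \<longlonglongrightarrow> y"
proof -
  have "y \<in> closure (cspan (range e))" using dense by simp
  then obtain s where "\<And>n. s n \<in> cspan (range e)" "s \<longlonglongrightarrow> y"
    by (auto simp: closure_sequential)
  then show ?thesis using that cspan_subset_combinations by blast
qed

definition diagonal :: "('h \<Rightarrow> 'h) \<Rightarrow> ('j \<Rightarrow> complex) \<Rightarrow> bool" where
  "diagonal T m \<longleftrightarrow> bounded_clinear T \<and> (\<forall>j. T (e j) = m j *\<^sub>C e j)"

lemma diagonal_cong: "diagonal T m \<Longrightarrow> (\<And>j. m j = n j) \<Longrightarrow> diagonal T n"
  by (simp add: diagonal_def)

lemma diagonal_combination:
  assumes "diagonal T m"
  shows "T (\<Sum>j\<in>F. x j *\<^sub>C e j) = (\<Sum>j\<in>F. (m j * x j) *\<^sub>C e j)"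
  using assms
  by (simp add: diagonal_def bounded_clinear_sum bounded_clinear_scaleC_commute scaleC_scaleC mult.commute)

lemma diagonal_continuous_on: "diagonal T m \<Longrightarrow> continuous_on S T"
  by (simp add: diagonal_def bounded_clinear_def linear_continuous_on)

text \<open>On finite combinations the bound is the Riesz inequalities combined; density and
  continuity extend it to the whole space.\<close>

lemma diagonal_norm_le:
  assumes "diagonal T m" and M: "\<And>j. cmod (m j) \<le> M"
  shows "norm (T y) \<le> sqrt (C / c) * M * norm y"
proof (rule mem_closed_superset_combinations[of "{y. norm (T y) \<le> sqrt (C / c) * M * norm y}", simplified])
  have M0: "0 \<le> M" using M[of undefined] norm_ge_zero order_trans by blast
  show "closed {y. norm (T y) \<le> sqrt (C / c) * M * norm y}"
    by (intro closed_Collect_le continuous_intros continuous_on_norm diagonal_continuous_on[OF assms(1)])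
  show "combinations \<subseteq> {y. norm (T y) \<le> sqrt (C / c) * M * norm y}"
  proof (clarsimp simp: combinations_def)
    fix F :: "'j set" and x assume F: "finite F"
    have "(norm (T (\<Sum>j\<in>F. x j *\<^sub>C e j)))\<^sup>2 \<le> C * (\<Sum>j\<in>F. (cmod (m j * x j))\<^sup>2)"
      unfolding diagonal_combination[OF assms(1)] using upper[OF F] .
    also have "\<dots> \<le> C * (\<Sum>j\<in>F. M\<^sup>2 * (cmod (x j))\<^sup>2)"
      using C_pos M M0
      by (intro mult_left_mono sum_mono) (auto simp: norm_mult power_mult_distrib intro!: mult_right_mono power_mono)
    also have "\<dots> = (C / c) * M\<^sup>2 * (c * (\<Sum>j\<in>F. (cmod (x j))\<^sup>2))"
      using c_pos by (simp add: sum_distrib_left field_simps)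
    also have "\<dots> \<le> (C / c) * M\<^sup>2 * (norm (\<Sum>j\<in>F. x j *\<^sub>C e j))\<^sup>2"
      using lower[OF F] c_pos C_pos by (intro mult_left_mono) auto
    also have "\<dots> = (sqrt (C / c) * M * norm (\<Sum>j\<in>F. x j *\<^sub>C e j))\<^sup>2"
      using c_pos C_pos by (simp add: power_mult_distrib)
    finally show "norm (T (\<Sum>j\<in>F. x j *\<^sub>C e j)) \<le> sqrt (C / c) * M * norm (\<Sum>j\<in>F. x j *\<^sub>C e j)"
      using M0 c_pos C_pos by (auto intro: power2_le_imp_le)
  qed
qed

lemma diagonal_norm_ge:
  assumes "diagonal T m" and M: "\<And>j. d \<le> cmod (m j)" and d0: "0 \<le> d"
  shows "sqrt (c / C) * d * norm y \<le> norm (T y)"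
proof (rule mem_closed_superset_combinations[of "{y. sqrt (c / C) * d * norm y \<le> norm (T y)}", simplified])
  show "closed {y. sqrt (c / C) * d * norm y \<le> norm (T y)}"
    by (intro closed_Collect_le continuous_intros continuous_on_norm diagonal_continuous_on[OF assms(1)])
  show "combinations \<subseteq> {y. sqrt (c / C) * d * norm y \<le> norm (T y)}"
  proof (clarsimp simp: combinations_def)
    fix F :: "'j set" and x assume F: "finite F"
    have "(sqrt (c / C) * d * norm (\<Sum>j\<in>F. x j *\<^sub>C e j))\<^sup>2 = (c / C) * d\<^sup>2 * (norm (\<Sum>j\<in>F. x j *\<^sub>C e j))\<^sup>2"
      using c_pos C_pos by (simp add: power_mult_distrib)
    also have "\<dots> \<le> (c / C) * d\<^sup>2 * (C * (\<Sum>j\<in>F. (cmod (x j))\<^sup>2))"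
      using upper[OF F] c_pos C_pos by (intro mult_left_mono) auto
    also have "\<dots> = c * (\<Sum>j\<in>F. d\<^sup>2 * (cmod (x j))\<^sup>2)"
      using C_pos by (simp add: sum_distrib_left field_simps)
    also have "\<dots> \<le> c * (\<Sum>j\<in>F. (cmod (m j * x j))\<^sup>2)"
      using c_pos M d0
      by (intro mult_left_mono sum_mono) (auto simp: norm_mult power_mult_distrib intro!: mult_right_mono power_mono)
    also have "\<dots> \<le> (norm (T (\<Sum>j\<in>F. x j *\<^sub>C e j)))\<^sup>2"
      unfolding diagonal_combination[OF assms(1)] using lower[OF F] .
    finally show "sqrt (c / C) * d * norm (\<Sum>j\<in>F. x j *\<^sub>C e j) \<le> norm (T (\<Sum>j\<in>F. x j *\<^sub>C e j))"
      by (auto intro: power2_le_imp_le)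
  qed
qed

lemma diagonal_add: "diagonal S m \<Longrightarrow> diagonal T n \<Longrightarrow> diagonal (\<lambda>x. S x + T x) (\<lambda>j. m j + n j)"
  by (simp add: diagonal_def bounded_clinear_add scaleC_add_left)

lemma diagonal_diff: "diagonal S m \<Longrightarrow> diagonal T n \<Longrightarrow> diagonal (\<lambda>x. S x - T x) (\<lambda>j. m j - n j)"
  by (simp add: diagonal_def bounded_clinear_diff scaleC_diff_left)

lemma diagonal_compose: "diagonal S m \<Longrightarrow> diagonal T n \<Longrightarrow> diagonal (\<lambda>x. S (T x)) (\<lambda>j. m j * n j)"
  by (simp add: diagonal_def bounded_clinear_compose bounded_clinear_scaleC_commute scaleC_scaleC mult.commute)

lemma diagonal_scaleC: "diagonal T m \<Longrightarrow> diagonal (\<lambda>x. a *\<^sub>C T x) (\<lambda>j. a * m j)"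
  by (simp add: diagonal_def bounded_clinear_scaleC scaleC_scaleC)

lemma diagonal_ident: "diagonal (\<lambda>x. x) (\<lambda>j. 1)"
  by (simp add: diagonal_def bounded_clinear_ident)

lemma diagonal_funpow: "diagonal T m \<Longrightarrow> diagonal (T ^^ k) (\<lambda>j. m j ^ k)"
proof (induction k)
  case (Suc k)
  then show ?case using diagonal_compose[of T m "T ^^ k"] by (simp add: comp_def)
qed (simp add: id_def diagonal_ident)

lemma diagonal_unique:
  assumes "diagonal S m" "diagonal T m"
  shows "S = T"
proof
  fix y
  have "norm (S y - T y) \<le> sqrt (C / c) * 0 * norm y"
    using diagonal_diff[OF assms] by (rule diagonal_norm_le) simp
  then show "S y = T y" by simp
qed

lemma diagonal_eigenvalues_bounded:
  assumes "diagonal T m"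
  obtains K where "K > 0" "\<And>j. cmod (m j) \<le> K"
proof -
  obtain K where K: "K > 0" "\<And>y. norm (T y) \<le> K * norm y"
    using assms bounded_clinear_pos_bound by (auto simp: diagonal_def)
  have "cmod (m j) * norm (e j) \<le> K * norm (e j)" for j
    using K(2)[of "e j"] assms by (simp add: diagonal_def)
  then have "cmod (m j) \<le> K" for j using basis_nonzero[of j] by (simp add: mult_le_cancel_right)
  then show ?thesis using that K(1) by blast
qed

text \<open>A diagonal operator whose eigenvalues stay away from zero is bounded below, so its
  range is complete, hence closed, and contains every finite combination.\<close>

lemma diagonal_bij:
  assumes T: "diagonal T m" and d: "0 < d" and M: "\<And>j. d \<le> cmod (m j)"
  shows "bij T"
proof -
  have blT: "bounded_linear T" using T by (simp add: diagonal_def bounded_clinear_def)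
  define k where "k = sqrt (c / C) * d"
  have k0: "0 < k" using c_pos C_pos d by (simp add: k_def)
  have low: "k * norm y \<le> norm (T y)" for y unfolding k_def using diagonal_norm_ge[OF T M] d by simp
  have "inj T"
  proof (rule injI)
    fix x y assume "T x = T y"
    then have "k * norm (x - y) \<le> 0" using low[of "x - y"] blT by (simp add: linear_simps)
    then show "x = y" using k0 by (simp add: mult_le_0_iff)
  qed
  moreover have "complete (T ` UNIV)"
    by (rule complete_isometric_image[OF k0 subspace_UNIV blT]) (use low complete_UNIV in auto)
  then have "y \<in> range T" for y
  proof (intro mem_closed_superset_combinations complete_imp_closed)
    show "combinations \<subseteq> range T"
    proof (clarsimp simp: combinations_def)
      fix F :: "'j set" and x
      have "m j \<noteq> 0" for j using M[of j] d by auto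
      then have "T (\<Sum>j\<in>F. (x j / m j) *\<^sub>C e j) = (\<Sum>j\<in>F. x j *\<^sub>C e j)"
        unfolding diagonal_combination[OF T] by simp
      then show "(\<Sum>j\<in>F. x j *\<^sub>C e j) \<in> range T" by (metis rangeI)
    qed
  qed
  ultimately show ?thesis by (auto simp: bij_def surj_def)
qed

lemma diagonal_inv:
  assumes T: "diagonal T m" and d: "0 < d" and M: "\<And>j. d \<le> cmod (m j)"
  shows "diagonal (inv T) (\<lambda>j. 1 / m j)"
proof -
  have bij: "bij T" using diagonal_bij[OF assms] .
  have blT: "bounded_linear T" using T by (simp add: diagonal_def bounded_clinear_def)
  have Tinv: "T (inv T y) = y" for y using bij by (simp add: bij_is_surj surj_f_inv_f)
  have invT: "inv T (T x) = x" for x using bij by (simp add: bij_is_inj)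
  define k where "k = sqrt (c / C) * d"
  have k0: "0 < k" using c_pos C_pos d by (simp add: k_def)
  have "bounded_linear (inv T)"
  proof (rule bounded_linear_intro[where K="1/k"])
    show "inv T (x + y) = inv T x + inv T y" for x y
      using invT[of "inv T x + inv T y"] blT Tinv by (simp add: linear_simps)
    show "inv T (r *\<^sub>R x) = r *\<^sub>R inv T x" for r x
      using invT[of "r *\<^sub>R inv T x"] blT Tinv by (simp add: linear_simps)
    show "norm (inv T x) \<le> norm x * (1 / k)" for x
      using diagonal_norm_ge[OF T M, of "inv T x"] d k0 Tinv by (simp add: k_def field_simps)
  qed
  moreover have "inv T (a *\<^sub>C x) = a *\<^sub>C inv T x" for a x
    using invT[of "a *\<^sub>C inv T x"] T Tinv by (simp add: diagonal_def bounded_clinear_scaleC_commute)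
  moreover have "inv T (e j) = (1 / m j) *\<^sub>C e j" for j
  proof -
    have "m j \<noteq> 0" using M[of j] d by auto
    then show ?thesis
      using invT[of "(1 / m j) *\<^sub>C e j"] T by (simp add: diagonal_def bounded_clinear_scaleC_commute scaleC_scaleC)
  qed
  ultimately show ?thesis by (simp add: diagonal_def bounded_clinear_def)
qed

end

lemma riesz_basis_imp_riesz_bounds: "riesz_basis e \<Longrightarrow> \<exists>c C. riesz_bounds e c C"
  unfolding riesz_basis_def riesz_bounds_def by blast

section \<open>The operator exponential\<close>

subclass (in chilbert_space) banach ..

lemma funpow_norm_le:
  fixes A :: "'a::real_normed_vector \<Rightarrow> 'a"
  assumes "\<And>y. norm (A y) \<le> K * norm y" "0 \<le> K"
  shows "norm ((A ^^ n) y) \<le> K ^ n * norm y"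
proof (induction n)
  case (Suc n)
  have "norm ((A ^^ Suc n) y) = norm (A ((A ^^ n) y))" by simp
  also have "\<dots> \<le> K * norm ((A ^^ n) y)" by (rule assms(1))
  also have "\<dots> \<le> K * (K ^ n * norm y)" using Suc assms(2) by (rule mult_left_mono)
  finally show ?case by simp
qed simp

lemma norm_exp_op_term_le:
  fixes A :: "'a::real_normed_vector \<Rightarrow> 'a"
  assumes "\<And>y. norm (A y) \<le> K * norm y" "0 \<le> K"
  shows "norm ((t ^ n / fact n) *\<^sub>R (A ^^ n) x) \<le> (\<bar>t\<bar> * K) ^ n /\<^sub>R fact n * norm x"
proof -
  have "norm ((t ^ n / fact n) *\<^sub>R (A ^^ n) x) = \<bar>t\<bar> ^ n / fact n * norm ((A ^^ n) x)"
    by (simp add: power_abs)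
  also have "\<dots> \<le> \<bar>t\<bar> ^ n / fact n * (K ^ n * norm x)"
    by (intro mult_left_mono funpow_norm_le[OF assms]) auto
  also have "\<dots> = (\<bar>t\<bar> * K) ^ n /\<^sub>R fact n * norm x"
    by (simp add: power_mult_distrib field_simps)
  finally show ?thesis .
qed

lemma summable_exp_op_series:
  assumes "bounded_clinear (A::'a::chilbert_space \<Rightarrow> 'a)"
  shows "summable (\<lambda>n. (t ^ n / fact n) *\<^sub>R (A ^^ n) x)"
proof -
  obtain K where K: "K > 0" "\<And>y. norm (A y) \<le> K * norm y"
    using bounded_clinear_pos_bound[OF assms] by blast
  have "summable (\<lambda>n. (\<bar>t\<bar> * K) ^ n /\<^sub>R fact n * norm x)"
    by (intro summable_mult2 summable_exp_generic)
  then show ?thesis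
    by (rule summable_comparison_test'[where N=0]) (rule norm_exp_op_term_le[OF K(2) less_imp_le[OF K(1)]])
qed

lemma norm_exp_op_le:
  fixes A :: "'a::chilbert_space \<Rightarrow> 'a"
  assumes "\<And>y. norm (A y) \<le> K * norm y" "0 \<le> K"
  shows "norm (exp_op t A x) \<le> exp (\<bar>t\<bar> * K) * norm x"
proof -
  have "norm (exp_op t A x) \<le> (\<Sum>n. (\<bar>t\<bar> * K) ^ n /\<^sub>R fact n * norm x)"
    unfolding exp_op_def
    by (rule norm_suminf_le[OF norm_exp_op_term_le[OF assms]]) (intro summable_mult2 summable_exp_generic)
  also have "\<dots> = exp (\<bar>t\<bar> * K) * norm x"
    by (simp only: suminf_mult2[OF summable_exp_generic, symmetric] exp_def)
  finally show ?thesis .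
qed

lemma bounded_clinear_exp_op:
  assumes A: "bounded_clinear (A::'a::chilbert_space \<Rightarrow> 'a)"
  shows "bounded_clinear (exp_op t A)"
proof -
  have blA: "bounded_clinear (A ^^ n)" for n by (rule bounded_clinear_funpow[OF A])
  have add: "exp_op t A (x + y) = exp_op t A x + exp_op t A y" for x y
    unfolding exp_op_def using blA
    by (simp add: bounded_clinear_def linear_simps scaleR_add_right
        suminf_add[OF summable_exp_op_series[OF A] summable_exp_op_series[OF A]])
  have scale: "exp_op t A (a *\<^sub>C x) = a *\<^sub>C exp_op t A x" for a x
    unfolding exp_op_def using blA
    by (simp add: bounded_clinear_scaleC_commute scaleC_scaleR_commute
        bounded_linear.suminf[OF bounded_linear_scaleC_right summable_exp_op_series[OF A]])
  obtain K where K: "K > 0" "\<And>y. norm (A y) \<le> K * norm y"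
    using bounded_clinear_pos_bound[OF A] by blast
  have "bounded_linear (exp_op t A)"
  proof (rule bounded_linear_intro[where K="exp (\<bar>t\<bar> * K)"])
    show "exp_op t A (r *\<^sub>R x) = r *\<^sub>R exp_op t A x" for r x
      using scale[of "complex_of_real r" x] by (simp add: scaleC_of_real)
    show "norm (exp_op t A x) \<le> norm x * exp (\<bar>t\<bar> * K)" for x
      using norm_exp_op_le[OF K(2)] K(1) by (simp add: mult.commute)
  qed (rule add)
  then show ?thesis using scale by (simp add: bounded_clinear_def)
qed

lemma funpow_eigenvector:
  assumes "bounded_clinear A" "A v = m *\<^sub>C v"
  shows "(A ^^ n) v = (m ^ n) *\<^sub>C v"
  by (induction n) (use assms in \<open>simp_all add: bounded_clinear_scaleC_commute scaleC_scaleC mult.commute\<close>)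

lemma exp_op_eigenvector:
  assumes A: "bounded_clinear (A::'a::chilbert_space \<Rightarrow> 'a)" and v: "A v = m *\<^sub>C v"
  shows "exp_op t A v = exp (complex_of_real t * m) *\<^sub>C v"
proof -
  have "((complex_of_real t * m) ^ n /\<^sub>R fact n) *\<^sub>C v = (t ^ n / fact n) *\<^sub>R (A ^^ n) v" for n
  proof -
    have "((complex_of_real t * m) ^ n /\<^sub>R fact n) *\<^sub>C v = (complex_of_real (t ^ n / fact n) * m ^ n) *\<^sub>C v"
      by (simp add: power_mult_distrib scaleR_conv_of_real divide_inverse mult_ac)
    also have "\<dots> = (t ^ n / fact n) *\<^sub>R (m ^ n *\<^sub>C v)"
      by (simp only: scaleC_scaleC[symmetric] scaleC_of_real)
    finally show ?thesis using funpow_eigenvector[OF A v] by simp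
  qed
  moreover have "(\<lambda>n. ((complex_of_real t * m) ^ n /\<^sub>R fact n) *\<^sub>C v) sums (exp (complex_of_real t * m) *\<^sub>C v)"
    by (rule bounded_linear.sums[OF bounded_linear_scaleC_left exp_converges])
  ultimately show ?thesis unfolding exp_op_def by (simp add: sums_iff)
qed

lemma (in riesz_bounds) diagonal_exp_op:
  "diagonal A m \<Longrightarrow> diagonal (exp_op t A) (\<lambda>j. exp (complex_of_real t * m j))"
  by (simp add: diagonal_def bounded_clinear_exp_op exp_op_eigenvector)

section \<open>Laplace transform and Cayley transform\<close>

lemma has_integral_exp_neg_complex:
  fixes w :: complex
  assumes w: "Re w > 0"
  shows "((\<lambda>t::real. exp (- (complex_of_real t * w))) has_integral 1 / w) {0..}"
proof -
  have w0: "w \<noteq> 0" using w by auto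
  define F where "F = (\<lambda>z::complex. - exp (- (z * w)) / w)"
  have dF: "(F has_field_derivative exp (- (z * w))) (at z)" for z
    unfolding F_def using w0 by (auto intro!: derivative_eq_intros simp: field_simps)
  have int_k: "((\<lambda>t. exp (- (complex_of_real t * w))) has_integral (F (of_real (real k)) - F (of_real 0))) {0..real k}"
    for k :: nat
    by (rule fundamental_theorem_of_calculus) (auto intro!: has_vector_derivative_real_field[OF dF])
  define f where "f = (\<lambda>(k::nat) t. if t \<in> {0..real k} then exp (- (complex_of_real t * w)) else 0)"
  have "(f k has_integral (F (of_real (real k)) - F 0)) {0..}" for k
    unfolding f_def using int_k[of k] by (subst has_integral_restrict) auto
  moreover have "(\<lambda>t. exp (- Re w * t)) integrable_on {0..}"
    using integrable_on_exp_minus_to_infinity[OF w] by simp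
  moreover have "\<forall>t\<in>{0..}. norm (f k t) \<le> exp (- Re w * t)" for k
    by (auto simp: f_def norm_exp_eq_Re)
  moreover have "\<forall>t\<in>{0..}. (\<lambda>k. f k t) \<longlonglongrightarrow> exp (- (complex_of_real t * w))"
  proof
    fix t :: real assume "t \<in> {0..}"
    then have "eventually (\<lambda>k. f k t = exp (- (complex_of_real t * w))) sequentially"
      using eventually_ge_at_top[of "nat \<lceil>t\<rceil>"] real_nat_ceiling_ge[of t]
      by (elim eventually_mono) (auto simp: f_def)
    then show "(\<lambda>k. f k t) \<longlonglongrightarrow> exp (- (complex_of_real t * w))"
      by (rule tendsto_eventually)
  qed
  moreover have "(\<lambda>k. F (of_real (real k)) - F 0) \<longlonglongrightarrow> 1 / w"
  proof -
    have "(\<lambda>k. exp (- Re w * real k)) \<longlonglongrightarrow> 0"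
      using w by real_asymp
    then have "(\<lambda>k. exp (- (complex_of_real (real k) * w))) \<longlonglongrightarrow> 0"
      by (subst tendsto_norm_zero_iff[symmetric]) (simp add: norm_exp_eq_Re mult.commute)
    then have "(\<lambda>k. - exp (- (complex_of_real (real k) * w)) / w + 1 / w) \<longlonglongrightarrow> - 0 / w + 1 / w"
      by (intro tendsto_intros) (use w0 in auto)
    then show ?thesis by (simp add: F_def)
  qed
  ultimately show ?thesis
    by (rule has_integral_dominated_convergence)
qed

definition cayley :: "complex \<Rightarrow> complex" where
  "cayley z = (1 - z) / (1 + z)"

lemma one_plus_neq_zero: "Re z \<ge> 0 \<Longrightarrow> 1 + z \<noteq> 0"
  by (auto simp: complex_eq_iff)

lemma norm_one_plus_ge: "Re z \<ge> 0 \<Longrightarrow> 1 \<le> cmod (1 + z)"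
  using complex_Re_le_cmod[of "1 + z"] by simp

lemma norm_one_plus_sq_diff: "(cmod (1 + z))\<^sup>2 - (cmod (1 - z))\<^sup>2 = 4 * Re z"
  unfolding cmod_power2 by (simp add: power2_eq_square algebra_simps)

lemma norm_cayley_le_1:
  assumes "Re z \<ge> 0"
  shows "cmod (cayley z) \<le> 1"
proof -
  have "(cmod (1 - z))\<^sup>2 \<le> (cmod (1 + z))\<^sup>2"
    using norm_one_plus_sq_diff[of z] assms by linarith
  then have "cmod (1 - z) \<le> cmod (1 + z)"
    by (rule power2_le_imp_le) simp
  then show ?thesis using norm_one_plus_ge[OF assms] by (simp add: cayley_def norm_divide divide_le_eq)
qed

lemma norm_cayley_lt_1:
  assumes "Re z > 0"
  shows "cmod (cayley z) < 1"
proof -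
  have "(cmod (1 - z))\<^sup>2 < (cmod (1 + z))\<^sup>2"
    using norm_one_plus_sq_diff[of z] assms by linarith
  then have "cmod (1 - z) < cmod (1 + z)"
    by (rule power2_less_imp_less) simp
  moreover have "cmod (1 + z) > 0" using one_plus_neq_zero[of z] assms by simp
  ultimately show ?thesis by (simp add: cayley_def norm_divide)
qed

lemma cnj_cayley: "cnj (cayley z) = cayley (cnj z)"
  by (simp add: cayley_def)

lemma cayley_diff:
  "1 + a \<noteq> 0 \<Longrightarrow> 1 + b \<noteq> 0 \<Longrightarrow> cayley a - cayley b = 2 * (b - a) / ((1 + a) * (1 + b))"
  by (simp add: cayley_def divide_simps) (simp add: algebra_simps)

lemma one_plus_cayley: "1 + z \<noteq> 0 \<Longrightarrow> 1 + cayley z = 2 / (1 + z)"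
  by (simp add: cayley_def divide_simps)

lemma cayley_cayley:
  assumes z: "1 + z \<noteq> 0"
  shows "cayley (cayley z) = z"
proof -
  have "1 - cayley z = 2 * z / (1 + z)" using z by (simp add: cayley_def divide_simps)
  then show ?thesis using z by (simp add: cayley_def[of "cayley z"] one_plus_cayley divide_simps)
qed

lemma one_minus_cayley_mult:
  assumes "1 + x \<noteq> 0" "1 + y \<noteq> 0"
  shows "1 - cayley x * cayley y = 2 * (x + y) / ((1 + x) * (1 + y))"
proof -
  have "cayley x * cayley y * ((1 + x) * (1 + y)) = (1 - x) * (1 - y)"
    using assms by (simp add: cayley_def)
  then have "(1 - cayley x * cayley y) * ((1 + x) * (1 + y)) = 2 * (x + y)"
    by (simp only: left_diff_distrib) (simp add: algebra_simps)
  then show ?thesis using assms by (simp add: eq_divide_eq)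
qed

text \<open>The Laplace transform of a product of two exponentials, expanded as a geometric
  series in the Cayley transforms: this is where the discrete orbit comes from.\<close>

lemma cayley_geometric_sums:
  assumes x: "Re x > 0" and y: "Re y > 0"
  shows "(\<lambda>n. 2 / ((1 + x) * (1 + y)) * (cayley x * cayley y) ^ n) sums (1 / (x + y))"
proof -
  have nz: "1 + x \<noteq> 0" "1 + y \<noteq> 0" "x + y \<noteq> 0"
    using x y one_plus_neq_zero[of x] one_plus_neq_zero[of y] by (auto simp: complex_eq_iff)
  have "cmod (cayley x) * cmod (cayley y) < 1 * 1"
    using norm_cayley_lt_1[OF x] norm_cayley_lt_1[OF y] by (intro mult_strict_mono') auto
  then have "(\<lambda>n. (cayley x * cayley y) ^ n) sums (1 / (1 - cayley x * cayley y))"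
    by (intro geometric_sums) (simp add: norm_mult)
  then have "(\<lambda>n. 2 / ((1 + x) * (1 + y)) * (cayley x * cayley y) ^ n)
      sums (2 / ((1 + x) * (1 + y)) * (1 / (1 - cayley x * cayley y)))"
    by (rule sums_mult)
  also have "2 / ((1 + x) * (1 + y)) * (1 / (1 - cayley x * cayley y)) = 1 / (x + y)"
  proof -
    have "2 / P * (1 / (2 * (x + y) / P)) = 1 / (x + y)" if "P \<noteq> 0" for P
    proof -
      have "2 / P * (1 / (2 * (x + y) / P)) = 2 / (2 * (x + y))" using that by simp
      also have "\<dots> = 1 / (x + y)" by (rule nonzero_divide_mult_cancel_left) simp
      finally show ?thesis .
    qed
    then show ?thesis unfolding one_minus_cayley_mult[OF nz(1,2)] using nz by simp
  qed
  finally show ?thesis .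
qed

lemma norm_sum_sq_eq: "(cmod (\<Sum>j\<in>G. a j))\<^sup>2 = Re (\<Sum>j\<in>G. \<Sum>k\<in>G. a j * cnj (a k))"
  using complex_norm_square[of "\<Sum>j\<in>G. a j"]
  by (metis Re_complex_of_real cnj_sum sum_product)

lemma nn_integral_exp_sum_sq:
  fixes d \<nu> :: "'j \<Rightarrow> complex"
  assumes G: "finite G" and pos: "\<And>j. j \<in> G \<Longrightarrow> Re (\<nu> j) > 0"
  shows "(\<integral>\<^sup>+ t. ennreal ((cmod (\<Sum>j\<in>G. d j * exp (- (complex_of_real t * \<nu> j))))\<^sup>2) * indicator {0..} t \<partial>lborel)
       = ennreal (Re (\<Sum>j\<in>G. \<Sum>k\<in>G. d j * cnj (d k) / (\<nu> j + cnj (\<nu> k))))"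
proof (rule nn_integral_has_integral_lebesgue')
  have expand: "d j * exp (- (complex_of_real t * \<nu> j)) * cnj (d k * exp (- (complex_of_real t * \<nu> k)))
      = d j * cnj (d k) * exp (- (complex_of_real t * (\<nu> j + cnj (\<nu> k))))" for j k t
    by (simp add: exp_cnj distrib_left exp_add[symmetric] mult_ac)
  have "((\<lambda>t. \<Sum>j\<in>G. \<Sum>k\<in>G. d j * cnj (d k) * exp (- (complex_of_real t * (\<nu> j + cnj (\<nu> k)))))
      has_integral (\<Sum>j\<in>G. \<Sum>k\<in>G. d j * cnj (d k) * (1 / (\<nu> j + cnj (\<nu> k))))) {0..}"
    using pos by (intro has_integral_sum G has_integral_mult_right has_integral_exp_neg_complex) (simp add: add_pos_pos)
  from has_integral_linear[OF this bounded_linear_Re]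
  show "((\<lambda>t. (cmod (\<Sum>j\<in>G. d j * exp (- (complex_of_real t * \<nu> j))))\<^sup>2)
      has_integral Re (\<Sum>j\<in>G. \<Sum>k\<in>G. d j * cnj (d k) / (\<nu> j + cnj (\<nu> k)))) {0..}"
    unfolding norm_sum_sq_eq expand by (simp add: comp_def)
qed simp

lemma nn_integral_cayley_sum_sq:
  fixes d \<nu> :: "'j \<Rightarrow> complex"
  assumes G: "finite G" and pos: "\<And>j. j \<in> G \<Longrightarrow> Re (\<nu> j) > 0"
  shows "(\<integral>\<^sup>+ n. ennreal ((cmod (\<Sum>j\<in>G. d j * (cayley (\<nu> j) ^ n * (complex_of_real (sqrt 2) * (1 / (1 + \<nu> j))))))\<^sup>2)
           \<partial>count_space UNIV)
       = ennreal (Re (\<Sum>j\<in>G. \<Sum>k\<in>G. d j * cnj (d k) / (\<nu> j + cnj (\<nu> k))))"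
proof -
  have sqrt2: "complex_of_real (sqrt 2) * complex_of_real (sqrt 2) = 2"
    by (simp flip: of_real_mult)
  have expand: "d j * (cayley (\<nu> j) ^ n * (complex_of_real (sqrt 2) * (1 / (1 + \<nu> j))))
      * cnj (d k * (cayley (\<nu> k) ^ n * (complex_of_real (sqrt 2) * (1 / (1 + \<nu> k)))))
      = d j * cnj (d k) * (2 / ((1 + \<nu> j) * (1 + cnj (\<nu> k))) * (cayley (\<nu> j) * cayley (cnj (\<nu> k))) ^ n)"
    for j k n
    by (simp add: cnj_cayley power_mult_distrib sqrt2[symmetric] mult_ac)
  have "(\<lambda>n. \<Sum>j\<in>G. \<Sum>k\<in>G. d j * cnj (d k) * (2 / ((1 + \<nu> j) * (1 + cnj (\<nu> k))) * (cayley (\<nu> j) * cayley (cnj (\<nu> k))) ^ n))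
      sums (\<Sum>j\<in>G. \<Sum>k\<in>G. d j * cnj (d k) * (1 / (\<nu> j + cnj (\<nu> k))))"
    using pos by (intro sums_sum sums_mult cayley_geometric_sums) auto
  from sums_Re[OF this]
  have "(\<lambda>n. (cmod (\<Sum>j\<in>G. d j * (cayley (\<nu> j) ^ n * (complex_of_real (sqrt 2) * (1 / (1 + \<nu> j))))))\<^sup>2)
      sums Re (\<Sum>j\<in>G. \<Sum>k\<in>G. d j * cnj (d k) / (\<nu> j + cnj (\<nu> k)))"
    unfolding norm_sum_sq_eq expand by simp
  then show ?thesis
    by (simp add: nn_integral_count_space_nat suminf_ennreal2 sums_summable sums_unique[symmetric])
qed

lemma norm_cayley_le_uniform:
  assumes \<delta>: "0 < \<delta>" "\<delta> \<le> Re z" and K: "cmod z \<le> K"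
  shows "cmod (cayley z) \<le> 1 - 2 * \<delta> / (1 + K)\<^sup>2"
proof -
  define q where "q = 1 - 2 * \<delta> / (1 + K)\<^sup>2"
  define a where "a = (cmod (1 + z))\<^sup>2"
  define P where "P = 4 * \<delta> * a / (1 + K)\<^sup>2"
  have dK: "\<delta> \<le> K" using \<delta> K complex_Re_le_cmod[of z] by linarith
  then have K0: "0 < 1 + K" using \<delta> by linarith
  have "(1 + K)\<^sup>2 = 1 + 2 * K + K * K" by (simp add: power2_eq_square algebra_simps)
  then have "2 * \<delta> \<le> (1 + K)\<^sup>2" using dK zero_le_square[of K] by linarith
  then have q0: "0 \<le> q" using \<delta> by (simp add: q_def divide_le_eq)
  have pos: "cmod (1 + z) > 0" using one_plus_neq_zero[of z] \<delta> by simp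
  have "a \<le> (1 + K)\<^sup>2"
    unfolding a_def using norm_triangle_ineq[of 1 z] K by (intro power_mono) auto
  then have "\<delta> * a \<le> Re z * (1 + K)\<^sup>2"
    using \<delta> by (intro mult_mono) (auto simp: a_def)
  then have "P \<le> 4 * Re z"
    using K0 by (simp add: P_def divide_le_eq)
  moreover have "a * (1 - 4 * \<delta> / (1 + K)\<^sup>2) = a - P"
    by (simp add: P_def right_diff_distrib)
  ultimately have "(cmod (1 - z))\<^sup>2 \<le> a * (1 - 4 * \<delta> / (1 + K)\<^sup>2)"
    using norm_one_plus_sq_diff[of z] unfolding a_def by linarith
  also have "\<dots> \<le> a * q\<^sup>2"
  proof (rule mult_left_mono)
    have "1 - 2 * x \<le> (1 - x)\<^sup>2" for x :: real
      using zero_le_square[of x] by (simp add: power2_eq_square algebra_simps)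
    from this[of "2 * \<delta> / (1 + K)\<^sup>2"] show "1 - 4 * \<delta> / (1 + K)\<^sup>2 \<le> q\<^sup>2"
      by (simp add: q_def)
  qed (simp add: a_def)
  finally have "(cmod (1 - z))\<^sup>2 \<le> (q * cmod (1 + z))\<^sup>2"
    unfolding a_def by (simp only: power_mult_distrib mult.commute)
  then have "cmod (1 - z) \<le> q * cmod (1 + z)"
    by (rule power2_le_imp_le) (use q0 in simp)
  then show ?thesis using pos by (simp add: q_def cayley_def norm_divide divide_le_eq)
qed

lemma Re_cayley_ge:
  assumes w: "cmod w \<le> r" and r: "r < 1"
  shows "(1 - r\<^sup>2) / 4 \<le> Re (cayley w)"
proof -
  have "1 + w \<noteq> 0"
  proof
    assume "1 + w = 0"
    then have "w = -1" by (simp add: add_eq_0_iff)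
    then show False using w r by simp
  qed
  then have pos: "0 < (cmod (1 + w))\<^sup>2" by simp
  have le4: "(cmod (1 + w))\<^sup>2 \<le> 4"
    using norm_triangle_ineq[of 1 w] w r power_mono[of "cmod (1 + w)" 2 2] by simp
  have n1: "1 - r\<^sup>2 \<le> 1 - (cmod w)\<^sup>2" "0 \<le> 1 - (cmod w)\<^sup>2"
    using w r by (auto intro!: power_mono simp: power_le_one abs_le_iff)
  have "(1 - r\<^sup>2) / 4 \<le> (1 - (cmod w)\<^sup>2) / 4" using n1 by simp
  also have "\<dots> \<le> (1 - (cmod w)\<^sup>2) / (cmod (1 + w))\<^sup>2"
    using n1 pos le4 by (intro divide_left_mono) auto
  also have "\<dots> = Re (cayley w)"
    unfolding cayley_def Re_divide cmod_power2 by (simp add: power2_eq_square algebra_simps)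
  finally show ?thesis .
qed

lemma norm_exp_diff_le:
  assumes a: "Re a \<ge> 0" and b: "Re b \<ge> 0" and t: "t \<ge> 0"
  shows "cmod (exp (complex_of_real t * - a) - exp (complex_of_real t * - b)) \<le> t * cmod (a - b)"
proof -
  have "norm ((\<lambda>z. exp (complex_of_real t * - z)) a - (\<lambda>z. exp (complex_of_real t * - z)) b) \<le> t * norm (a - b)"
  proof (rule field_differentiable_bound[where S="{z. Re z \<ge> 0}"])
    show "((\<lambda>z. exp (complex_of_real t * - z)) has_field_derivative
        (- complex_of_real t * exp (complex_of_real t * - z))) (at z within {z. Re z \<ge> 0})" for z
      by (auto intro!: derivative_eq_intros)
    show "norm (- complex_of_real t * exp (complex_of_real t * - z)) \<le> t" if "z \<in> {z. Re z \<ge> 0}" for z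
      using that t by (simp add: norm_mult norm_exp_eq_Re mult_left_le)
  qed (use a b convex_halfspace_Re_ge in auto)
  then show ?thesis by simp
qed

lemma norm_cayley_power_div_diff_le:
  assumes a: "Re a \<ge> 0" and b: "Re b \<ge> 0"
  shows "cmod (cayley a ^ n * (1 / (1 + a)) - cayley b ^ n * (1 / (1 + b))) \<le> (2 * real n + 1) * cmod (a - b)"
proof -
  have a1: "1 + a \<noteq> 0" and b1: "1 + b \<noteq> 0" using one_plus_neq_zero a b by auto
  have ab: "1 \<le> cmod ((1 + a) * (1 + b))"
    using mult_mono[OF norm_one_plus_ge[OF a] norm_one_plus_ge[OF b]] by (simp add: norm_mult)
  have "cmod (cayley a - cayley b) = 2 * cmod (b - a) / cmod ((1 + a) * (1 + b))"
    by (simp only: cayley_diff[OF a1 b1] norm_divide norm_mult) simp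
  also have "\<dots> \<le> 2 * cmod (a - b)"
    using ab by (simp add: divide_le_eq mult_le_cancel_left1 norm_minus_commute)
  finally have "cmod (cayley a - cayley b) \<le> 2 * cmod (a - b)" .
  then have "real n * cmod (cayley a - cayley b) \<le> real n * (2 * cmod (a - b))"
    by (rule mult_left_mono) simp
  then have dn: "cmod (cayley a ^ n - cayley b ^ n) \<le> 2 * n * cmod (a - b)"
    using norm_power_diff[OF norm_cayley_le_1[OF a] norm_cayley_le_1[OF b], of n] by linarith
  have du: "cmod (1 / (1 + a) - 1 / (1 + b)) \<le> cmod (a - b)"
  proof -
    have "cmod (1 / (1 + a) - 1 / (1 + b)) = cmod (b - a) / cmod ((1 + a) * (1 + b))"
      using a1 b1 by (simp add: divide_simps norm_divide)
    also have "\<dots> \<le> cmod (a - b)" using ab by (simp add: divide_le_eq mult_le_cancel_left1 norm_minus_commute)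
    finally show ?thesis .
  qed
  have ua: "cmod (1 / (1 + a)) \<le> 1" using norm_one_plus_ge[OF a] by (simp add: norm_divide divide_le_eq)
  have yb: "cmod (cayley b ^ n) \<le> 1" using norm_cayley_le_1[OF b] by (simp add: norm_power power_le_one)
  have "cayley a ^ n * (1 / (1 + a)) - cayley b ^ n * (1 / (1 + b))
      = (cayley a ^ n - cayley b ^ n) * (1 / (1 + a)) + cayley b ^ n * (1 / (1 + a) - 1 / (1 + b))"
    by (simp add: algebra_simps)
  then have "cmod (cayley a ^ n * (1 / (1 + a)) - cayley b ^ n * (1 / (1 + b)))
      \<le> cmod (cayley a ^ n - cayley b ^ n) * cmod (1 / (1 + a)) + cmod (cayley b ^ n) * cmod (1 / (1 + a) - 1 / (1 + b))"
    by (metis norm_mult norm_triangle_ineq)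
  also have "\<dots> \<le> (2 * n * cmod (a - b)) * 1 + 1 * cmod (a - b)"
    by (intro add_mono mult_mono dn ua yb du) auto
  finally show ?thesis by (simp add: algebra_simps)
qed

text \<open>The factor (1 + m') / (1 + m) is what relates the orbit of the rescaled generator to that
  of the original one.\<close>

lemma norm_exp_multiplier_diff_le:
  assumes m: "Re m > 0" and m': "Re m' > 0" and t: "t \<ge> 0"
  shows "cmod (exp (complex_of_real t * - m') * ((1 + m') * (1 / (1 + m))) - exp (complex_of_real t * - m))
    \<le> cmod (m' - m) * (t * cmod (1 + m') + 1)"
proof -
  have m1: "1 + m \<noteq> 0" using one_plus_neq_zero[of m] m by simp
  have "exp (complex_of_real t * - m') * (1 + m') - exp (complex_of_real t * - m) * (1 + m)
      = (exp (complex_of_real t * - m') - exp (complex_of_real t * - m)) * (1 + m')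
        + exp (complex_of_real t * - m) * (m' - m)"
    by (simp add: algebra_simps)
  then have "cmod (exp (complex_of_real t * - m') * (1 + m') - exp (complex_of_real t * - m) * (1 + m))
      \<le> cmod (exp (complex_of_real t * - m') - exp (complex_of_real t * - m)) * cmod (1 + m')
        + cmod (exp (complex_of_real t * - m)) * cmod (m' - m)"
    by (metis norm_mult norm_triangle_ineq)
  also have "\<dots> \<le> (t * cmod (m' - m)) * cmod (1 + m') + 1 * cmod (m' - m)"
    using m m' t by (intro add_mono mult_mono norm_exp_diff_le) (auto simp: norm_exp_eq_Re)
  finally have num: "cmod (exp (complex_of_real t * - m') * (1 + m') - exp (complex_of_real t * - m) * (1 + m))
      \<le> cmod (m' - m) * (t * cmod (1 + m') + 1)"
    by (simp add: algebra_simps)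
  have "exp (complex_of_real t * - m') * ((1 + m') * (1 / (1 + m))) - exp (complex_of_real t * - m)
      = (exp (complex_of_real t * - m') * (1 + m') - exp (complex_of_real t * - m) * (1 + m)) / (1 + m)"
    using m1 by (simp add: field_simps)
  then have "cmod (exp (complex_of_real t * - m') * ((1 + m') * (1 / (1 + m))) - exp (complex_of_real t * - m))
      = cmod (exp (complex_of_real t * - m') * (1 + m') - exp (complex_of_real t * - m) * (1 + m)) / cmod (1 + m)"
    by (simp add: norm_divide)
  also have "\<dots> \<le> cmod (exp (complex_of_real t * - m') * (1 + m') - exp (complex_of_real t * - m) * (1 + m)) / 1"
    using norm_one_plus_ge[of m] m by (intro divide_left_mono) auto
  finally show ?thesis using num by simp
qed

lemma norm_cayley_rescaled_diff_le:
  assumes m: "Re m > 0" "cmod m \<le> K" and rr: "0 < rr" "rr * (1 + K) \<le> 1"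
  shows "cmod (cayley (complex_of_real (1 - rr) * cayley m) - m) \<le> rr * (1 + K)\<^sup>2"
proof -
  define w where "w = cayley m"
  define v where "v = complex_of_real (1 - rr) * w"
  have K0: "K \<ge> 0" using m(2) norm_ge_zero order_trans by blast
  have m1: "1 + m \<noteq> 0" using one_plus_neq_zero[of m] m by simp
  have w_lt: "cmod w < 1" unfolding w_def by (rule norm_cayley_lt_1[OF m(1)])
  have mw: "m = cayley w" unfolding w_def using cayley_cayley[OF m1] by simp
  have w1: "2 / (1 + K) \<le> cmod (1 + w)"
  proof -
    have "2 / (1 + K) \<le> 2 / cmod (1 + m)"
      using norm_triangle_ineq[of 1 m] m(2) m1 K0 by (intro divide_left_mono) auto
    also have "\<dots> = cmod (1 + w)" unfolding w_def one_plus_cayley[OF m1] by (simp add: norm_divide)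
    finally show ?thesis .
  qed
  have wv: "cmod (w - v) \<le> rr"
  proof -
    have "cmod (w - v) = rr * cmod w" using rr by (simp add: v_def algebra_simps norm_mult)
    also have "\<dots> \<le> rr" using w_lt rr by (simp add: mult_left_le)
    finally show ?thesis .
  qed
  have v1: "1 / (1 + K) \<le> cmod (1 + v)"
  proof -
    have "rr \<le> 1 / (1 + K)" using rr K0 by (simp add: field_simps)
    moreover have "cmod (1 + w) \<le> cmod (1 + v) + cmod (w - v)"
      using norm_triangle_ineq[of "1 + v" "w - v"] by simp
    ultimately show ?thesis using w1 wv by linarith
  qed
  have nz: "1 + v \<noteq> 0" "1 + w \<noteq> 0"
    using v1 w1 K0 by (auto simp: order.strict_trans2[OF _ v1] order.strict_trans2[OF _ w1])
  have "cmod (cayley v - cayley w) = 2 * cmod (w - v) / (cmod (1 + v) * cmod (1 + w))"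
    by (simp only: cayley_diff[OF nz] norm_divide norm_mult norm_numeral)
  also have "\<dots> \<le> 2 * rr / (1 / (1 + K) * (2 / (1 + K)))"
    using v1 w1 wv K0 rr by (intro frac_le mult_left_mono mult_mono) auto
  also have "\<dots> = rr * (1 + K)\<^sup>2" using K0 by (simp add: field_simps power2_eq_square)
  finally show ?thesis by (simp add: v_def w_def[symmetric] mw[symmetric])
qed

lemma norm_rescaled_multiplier_diff_le:
  fixes m :: complex and \<rho> K t :: real
  defines "m' \<equiv> cayley (complex_of_real (1 - \<rho>) * cayley m)"
  assumes m: "Re m > 0" "cmod m \<le> K" and \<rho>: "0 < \<rho>" "\<rho> * (1 + K) \<le> 1" and t: "t \<ge> 0"
  shows "cmod (exp (complex_of_real t * - m') * ((1 + m') * (1 / (1 + m))) - exp (complex_of_real t * - m))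
      \<le> \<rho> * (1 + K)\<^sup>2 * (2 * t * (1 + K) + 1)"
proof -
  have K0: "0 \<le> K" using m(2) norm_ge_zero order_trans by blast
  have "\<rho> * 1 \<le> \<rho> * (1 + K)" using \<rho>(1) K0 by (intro mult_left_mono) auto
  then have "\<rho> \<le> 1" using \<rho>(2) by simp
  then have "\<bar>1 - \<rho>\<bar> = 1 - \<rho>" by simp
  then have "cmod (complex_of_real (1 - \<rho>) * cayley m) = (1 - \<rho>) * cmod (cayley m)"
    by (simp only: norm_mult norm_of_real)
  then have "cmod (complex_of_real (1 - \<rho>) * cayley m) \<le> 1 - \<rho>"
    using norm_cayley_le_1[of m] m(1) \<open>\<rho> \<le> 1\<close> by (simp add: mult_left_le)
  then have "(1 - (1 - \<rho>)\<^sup>2) / 4 \<le> Re m'"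
    unfolding m'_def using \<rho>(1) by (intro Re_cayley_ge) auto
  moreover have "0 < (1 - (1 - \<rho>)\<^sup>2) / 4"
    using \<rho>(1) \<open>\<rho> \<le> 1\<close> by (simp add: power2_eq_square algebra_simps mult_pos_pos)
  ultimately have m'_pos: "Re m' > 0" by linarith
  have dm: "cmod (m' - m) \<le> \<rho> * (1 + K)\<^sup>2"
    unfolding m'_def by (rule norm_cayley_rescaled_diff_le[OF m \<rho>])
  have "cmod (1 + m') \<le> cmod (1 + m) + cmod (m' - m)"
    using norm_triangle_ineq[of "1 + m" "m' - m"] by simp
  also have "\<dots> \<le> (1 + K) + (\<rho> * (1 + K)) * (1 + K)"
    using norm_triangle_ineq[of 1 m] m(2) dm by (simp add: power2_eq_square mult.assoc)
  also have "\<dots> \<le> 2 * (1 + K)"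
  proof -
    have "(\<rho> * (1 + K)) * (1 + K) \<le> 1 * (1 + K)"
      using K0 by (intro mult_right_mono \<rho>(2)) simp
    then show ?thesis by simp
  qed
  finally have "t * cmod (1 + m') \<le> t * (2 * (1 + K))"
    using t by (rule mult_left_mono)
  then have "t * cmod (1 + m') + 1 \<le> 2 * t * (1 + K) + 1" by (simp add: algebra_simps)
  then have "cmod (m' - m) * (t * cmod (1 + m') + 1) \<le> \<rho> * (1 + K)\<^sup>2 * (2 * t * (1 + K) + 1)"
    using dm t \<rho>(1) by (intro mult_mono) auto
  then show ?thesis
    using norm_exp_multiplier_diff_le[OF m(1) m'_pos t] by linarith
qed

section \<open>Limits of integrals\<close>

lemma tendsto_nn_integral_norm_sq:
  fixes X :: "nat \<Rightarrow> 'a \<Rightarrow> complex"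
  assumes [measurable]: "\<And>n. X n \<in> borel_measurable M" "Y \<in> borel_measurable M" "w \<in> borel_measurable M"
    and bound: "\<And>n x. x \<in> space M \<Longrightarrow> cmod (X n x) \<le> w x"
    and finite: "(\<integral>\<^sup>+x. ennreal ((w x)\<^sup>2) \<partial>M) < \<infinity>"
    and lim: "\<And>x. x \<in> space M \<Longrightarrow> (\<lambda>n. X n x) \<longlonglongrightarrow> Y x"
  shows "(\<lambda>n. \<integral>\<^sup>+x. ennreal ((cmod (X n x))\<^sup>2) \<partial>M) \<longlonglongrightarrow> (\<integral>\<^sup>+x. ennreal ((cmod (Y x))\<^sup>2) \<partial>M)"
proof (rule nn_integral_dominated_convergence[OF _ _ _ _ finite])
  show "AE x in M. ennreal ((cmod (X n x))\<^sup>2) \<le> ennreal ((w x)\<^sup>2)" for n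
    using bound by (intro AE_I2 ennreal_leI power_mono) auto
  show "AE x in M. (\<lambda>n. ennreal ((cmod (X n x))\<^sup>2)) \<longlonglongrightarrow> ennreal ((cmod (Y x))\<^sup>2)"
    using lim by (intro AE_I2 tendsto_ennrealI tendsto_intros)
qed measurable

text \<open>Fatou's lemma on one side, monotonicity on the other: a limit of equal pairs of integrals
  transfers to an inequality.\<close>

lemma nn_integral_le_by_approximation:
  fixes u :: "nat \<Rightarrow> 'a \<Rightarrow> ennreal" and v :: "nat \<Rightarrow> 'b \<Rightarrow> ennreal"
  assumes "\<And>k. u k \<in> borel_measurable M"
    and "\<And>x. x \<in> space M \<Longrightarrow> (\<lambda>k. u k x) \<longlonglongrightarrow> u' x"
    and "\<And>k. (\<integral>\<^sup>+x. u k x \<partial>M) = (\<integral>\<^sup>+y. v k y \<partial>N)"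
    and "\<And>k y. y \<in> space N \<Longrightarrow> v k y \<le> v' y"
  shows "(\<integral>\<^sup>+x. u' x \<partial>M) \<le> (\<integral>\<^sup>+y. v' y \<partial>N)"
proof -
  have "(\<integral>\<^sup>+x. u' x \<partial>M) = (\<integral>\<^sup>+x. liminf (\<lambda>k. u k x) \<partial>M)"
    using assms(2) by (intro nn_integral_cong lim_imp_Liminf[symmetric]) auto
  also have "\<dots> \<le> liminf (\<lambda>k. \<integral>\<^sup>+y. v k y \<partial>N)"
    using nn_integral_liminf[OF assms(1)] by (simp add: assms(3))
  also have "\<dots> \<le> limsup (\<lambda>k. \<integral>\<^sup>+y. v k y \<partial>N)"
    by (rule Liminf_le_Limsup) simp
  also have "\<dots> \<le> (\<integral>\<^sup>+y. v' y \<partial>N)"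
    using assms(4) by (intro Limsup_bounded always_eventually allI nn_integral_mono) auto
  finally show ?thesis .
qed

section \<open>Orbit integrals and orbit sums\<close>

locale diagonal_generator = riesz_bounds e c C for e :: "'j \<Rightarrow> 'h::chilbert_space" and c C +
  fixes A :: "'h \<Rightarrow> 'h" and lam :: "'j \<Rightarrow> complex"
  assumes diagonal_A: "diagonal A (\<lambda>j. - lam j)"
    and Re_lam_pos: "\<And>j. Re (lam j) > 0"
begin

definition resolvent :: "'h \<Rightarrow> 'h" where
  "resolvent = inv (\<lambda>x. x - A x)"

definition cayley_op :: "'h \<Rightarrow> 'h" where
  "cayley_op = (\<lambda>x. resolvent x + A (resolvent x))"

definition cayley_orbit :: "nat \<Rightarrow> 'h \<Rightarrow> 'h" where
  "cayley_orbit n y = (cayley_op ^^ n) (sqrt 2 *\<^sub>R resolvent y)"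

definition orbit_integral :: "'h \<Rightarrow> 'h \<Rightarrow> ennreal" where
  "orbit_integral f y =
     (\<integral>\<^sup>+ t. ennreal ((cmod (cinner f (exp_op t A y)))\<^sup>2) \<partial>restrict_space lborel {0..})"

definition orbit_sum :: "'h \<Rightarrow> 'h \<Rightarrow> ennreal" where
  "orbit_sum f y = (\<integral>\<^sup>+ n. ennreal ((cmod (cinner f (cayley_orbit n y)))\<^sup>2) \<partial>count_space UNIV)"

lemma orbit_integral_eq_set_nn_integral:
  "orbit_integral f y = (\<integral>\<^sup>+ t\<in>{0..}. ennreal ((cmod (cinner f (exp_op t A y)))\<^sup>2) \<partial>lborel)"
  unfolding orbit_integral_def by (rule nn_integral_restrict_space) simp

lemma bounded_clinear_A: "bounded_clinear A"
  using diagonal_A by (simp add: diagonal_def)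

lemma norm_one_plus_lam_ge: "1 \<le> cmod (1 + lam j)"
  using norm_one_plus_ge Re_lam_pos less_imp_le by blast

lemma diagonal_one_minus_A: "diagonal (\<lambda>x. x - A x) (\<lambda>j. 1 + lam j)"
  using diagonal_diff[OF diagonal_ident diagonal_A] by simp

lemma diagonal_resolvent: "diagonal resolvent (\<lambda>j. 1 / (1 + lam j))"
  unfolding resolvent_def by (rule diagonal_inv[OF diagonal_one_minus_A zero_less_one norm_one_plus_lam_ge])

lemma diagonal_cayley_op: "diagonal cayley_op (\<lambda>j. cayley (lam j))"
proof (rule diagonal_cong)
  show "diagonal cayley_op (\<lambda>j. 1 / (1 + lam j) + (- lam j) * (1 / (1 + lam j)))"
    unfolding cayley_op_def by (rule diagonal_add[OF diagonal_resolvent diagonal_compose[OF diagonal_A diagonal_resolvent]])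
  show "1 / (1 + lam j) + (- lam j) * (1 / (1 + lam j)) = cayley (lam j)" for j
    by (simp add: cayley_def diff_divide_distrib add_divide_distrib)
qed

lemma diagonal_cayley_orbit:
  "diagonal (cayley_orbit n) (\<lambda>j. cayley (lam j) ^ n * (complex_of_real (sqrt 2) * (1 / (1 + lam j))))"
proof -
  have "cayley_orbit n = (\<lambda>y. (cayley_op ^^ n) (complex_of_real (sqrt 2) *\<^sub>C resolvent y))"
    by (rule ext) (simp add: cayley_orbit_def scaleC_of_real)
  then show ?thesis
    using diagonal_compose[OF diagonal_funpow[OF diagonal_cayley_op] diagonal_scaleC[OF diagonal_resolvent]]
    by simp
qed

lemma diagonal_exp_op_A: "diagonal (exp_op t A) (\<lambda>j. exp (complex_of_real t * - lam j))"
  by (rule diagonal_exp_op[OF diagonal_A])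

lemma cinner_exp_op_combination:
  "cinner f (exp_op t A (\<Sum>j\<in>F. x j *\<^sub>C e j))
     = (\<Sum>j\<in>F. cnj (x j) * cinner f (e j) * exp (- (complex_of_real t * cnj (lam j))))"
  unfolding diagonal_combination[OF diagonal_exp_op_A] cinner_sum_right cinner_scaleC_right
  by (intro sum.cong refl) (simp add: exp_cnj)

lemma cinner_cayley_orbit_combination:
  "cinner f (cayley_orbit n (\<Sum>j\<in>F. x j *\<^sub>C e j))
     = (\<Sum>j\<in>F. cnj (x j) * cinner f (e j)
          * (cayley (cnj (lam j)) ^ n * (complex_of_real (sqrt 2) * (1 / (1 + cnj (lam j))))))"
  unfolding diagonal_combination[OF diagonal_cayley_orbit] cinner_sum_right cinner_scaleC_right
  by (intro sum.cong refl) (simp add: cnj_cayley[symmetric])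

lemma orbit_integral_eq_orbit_sum_combination:
  assumes "y \<in> combinations"
  shows "orbit_integral f y = orbit_sum f y"
proof -
  obtain F x where F: "finite F" and y: "y = (\<Sum>j\<in>F. x j *\<^sub>C e j)"
    using assms by (auto simp: combinations_def)
  have pos: "Re (cnj (lam j)) > 0" for j using Re_lam_pos by simp
  show ?thesis
    unfolding orbit_integral_eq_set_nn_integral orbit_sum_def y
      cinner_exp_op_combination cinner_cayley_orbit_combination
      nn_integral_exp_sum_sq[OF F pos] nn_integral_cayley_sum_sq[OF F pos] ..
qed

lemma measurable_cinner_exp_op: "(\<lambda>t. cinner f (exp_op t A y)) \<in> borel_measurable borel"
proof -
  obtain s where s: "\<And>n. s n \<in> combinations" "s \<longlonglongrightarrow> y" using combinations_approx_seq by blast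
  have "(\<lambda>t. cinner f (exp_op t A (s n))) \<in> borel_measurable borel" for n
    using s(1)[of n]
    by (auto simp: combinations_def cinner_exp_op_combination intro!: borel_measurable_continuous_onI continuous_intros)
  moreover have "(\<lambda>n. cinner f (exp_op t A (s n))) \<longlonglongrightarrow> cinner f (exp_op t A y)" for t
    using bounded_linear.tendsto[OF bounded_clinear_bounded_linear[OF bounded_clinear_exp_op[OF bounded_clinear_A]] s(2)]
    by (rule tendsto_cinner_right)
  ultimately show ?thesis by (rule borel_measurable_LIMSEQ_metric)
qed

lemma norm_exp_op_le_uniform:
  assumes "\<And>j. \<delta> \<le> Re (lam j)" and "0 \<le> t"
  shows "norm (exp_op t A z) \<le> sqrt (C / c) * exp (- \<delta> * t) * norm z"
proof (rule diagonal_norm_le[OF diagonal_exp_op_A])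
  show "cmod (exp (complex_of_real t * - lam j)) \<le> exp (- \<delta> * t)" for j
    using assms mult_right_mono[OF assms(1)[of j] assms(2)] by (simp add: norm_exp_eq_Re mult.commute)
qed

lemma cayley_orbit_decay:
  assumes "0 < \<delta>" and "\<And>j. \<delta> \<le> Re (lam j)"
  obtains q where "0 \<le> q" "q < 1" "\<And>n z. norm (cayley_orbit n z) \<le> sqrt (C / c) * (q ^ n * sqrt 2) * norm z"
proof -
  obtain K where K: "K > 0" "\<And>j. cmod (lam j) \<le> K"
    using diagonal_eigenvalues_bounded[OF diagonal_A] by auto
  define q where "q = 1 - 2 * \<delta> / (1 + K)\<^sup>2"
  have cayley_le: "cmod (cayley (lam j)) \<le> q" for j
    unfolding q_def by (rule norm_cayley_le_uniform[OF assms(1,2) K(2)])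
  have q0: "0 \<le> q" using cayley_le[of undefined] norm_ge_zero order_trans by blast
  have "norm (cayley_orbit n z) \<le> sqrt (C / c) * (q ^ n * sqrt 2) * norm z" for n z
  proof (rule diagonal_norm_le[OF diagonal_cayley_orbit])
    fix j
    have "cmod (1 / (1 + lam j)) \<le> 1"
      using norm_one_plus_lam_ge[of j] by (simp add: norm_divide divide_le_eq)
    moreover have "cmod (cayley (lam j) ^ n) \<le> q ^ n"
      unfolding norm_power by (intro power_mono cayley_le) simp
    ultimately have "cmod (cayley (lam j) ^ n) * (sqrt 2 * cmod (1 / (1 + lam j))) \<le> q ^ n * (sqrt 2 * 1)"
      using q0 by (intro mult_mono) auto
    then show "cmod (cayley (lam j) ^ n * (complex_of_real (sqrt 2) * (1 / (1 + lam j)))) \<le> q ^ n * sqrt 2"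
      unfolding norm_mult norm_of_real by simp
  qed
  moreover have "q < 1" using assms(1) K(1) by (simp add: q_def)
  ultimately show ?thesis using that q0 by blast
qed

lemma tendsto_orbit_integral_uniform:
  assumes "0 < \<delta>" and \<delta>: "\<And>j. \<delta> \<le> Re (lam j)" and s: "s \<longlonglongrightarrow> y"
  shows "(\<lambda>n. orbit_integral f (s n)) \<longlonglongrightarrow> orbit_integral f y"
proof -
  obtain B where B: "B > 0" "\<And>n. norm (s n) \<le> B"
    using convergent_imp_Bseq[OF convergentI[OF s]] by (auto elim: BseqE)
  define k where "k = norm f * sqrt (C / c) * B"
  show ?thesis
    unfolding orbit_integral_def
  proof (rule tendsto_nn_integral_norm_sq[where w="\<lambda>t. k * exp (- \<delta> * t)"])
    show "(\<lambda>t. cinner f (exp_op t A (s n))) \<in> borel_measurable (restrict_space lborel {0..})" for n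
      by (intro measurable_restrict_space1) (simp add: measurable_cinner_exp_op)
    show "(\<lambda>t. cinner f (exp_op t A y)) \<in> borel_measurable (restrict_space lborel {0..})"
      by (intro measurable_restrict_space1) (simp add: measurable_cinner_exp_op)
    show "(\<lambda>t. k * exp (- \<delta> * t)) \<in> borel_measurable (restrict_space lborel {0..})"
      by (intro measurable_restrict_space1) simp
    show "cmod (cinner f (exp_op t A (s n))) \<le> k * exp (- \<delta> * t)"
      if "t \<in> space (restrict_space lborel {0..})" for n t
    proof -
      have "norm (exp_op t A (s n)) \<le> sqrt (C / c) * exp (- \<delta> * t) * B"
        using norm_exp_op_le_uniform[OF \<delta>, of t "s n"] B(2)[of n] that c_pos C_pos
        by (auto intro: order_trans mult_left_mono)
      then have "norm f * norm (exp_op t A (s n)) \<le> norm f * (sqrt (C / c) * exp (- \<delta> * t) * B)"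
        by (rule mult_left_mono) simp
      then show ?thesis
        using norm_cinner_le[of f "exp_op t A (s n)"] by (simp add: k_def mult_ac)
    qed
    have "((\<lambda>t. k\<^sup>2 * exp (- (2 * \<delta>) * t)) has_integral k\<^sup>2 * (exp (- (2 * \<delta>) * 0) / (2 * \<delta>))) {0..}"
      by (intro has_integral_mult_right has_integral_exp_minus_to_infinity) (use assms(1) in simp)
    moreover have "(k * exp (- \<delta> * t))\<^sup>2 = k\<^sup>2 * exp (- (2 * \<delta>) * t)" for t
      unfolding power_mult_distrib by (simp add: power2_eq_square flip: exp_add)
    ultimately have "(\<integral>\<^sup>+t. ennreal ((k * exp (- \<delta> * t))\<^sup>2) * indicator {0..} t \<partial>lborel) = ennreal (k\<^sup>2 / (2 * \<delta>))"
      by (intro nn_integral_has_integral_lebesgue') simp_all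
    then show "(\<integral>\<^sup>+t. ennreal ((k * exp (- \<delta> * t))\<^sup>2) \<partial>restrict_space lborel {0..}) < \<infinity>"
      by (simp add: nn_integral_restrict_space)
    show "(\<lambda>n. cinner f (exp_op t A (s n))) \<longlonglongrightarrow> cinner f (exp_op t A y)" for t
      using bounded_linear.tendsto[OF bounded_clinear_bounded_linear[OF bounded_clinear_exp_op[OF bounded_clinear_A]] s]
      by (rule tendsto_cinner_right)
  qed
qed

lemma tendsto_orbit_sum_uniform:
  assumes "0 < \<delta>" and \<delta>: "\<And>j. \<delta> \<le> Re (lam j)" and s: "s \<longlonglongrightarrow> y"
  shows "(\<lambda>n. orbit_sum f (s n)) \<longlonglongrightarrow> orbit_sum f y"
proof -
  obtain B where B: "B > 0" "\<And>n. norm (s n) \<le> B"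
    using convergent_imp_Bseq[OF convergentI[OF s]] by (auto elim: BseqE)
  obtain q where q: "0 \<le> q" "q < 1" "\<And>n z. norm (cayley_orbit n z) \<le> sqrt (C / c) * (q ^ n * sqrt 2) * norm z"
    using cayley_orbit_decay[OF assms(1) \<delta>] by blast
  define k where "k = norm f * sqrt (C / c) * sqrt 2 * B"
  show ?thesis
    unfolding orbit_sum_def
  proof (rule tendsto_nn_integral_norm_sq[where w="\<lambda>n. k * q ^ n"])
    show "cmod (cinner f (cayley_orbit m (s n))) \<le> k * q ^ m" for n m
    proof -
      have "sqrt (C / c) * (q ^ m * sqrt 2) * norm (s n) \<le> sqrt (C / c) * (q ^ m * sqrt 2) * B"
        using B(2)[of n] q(1) c_pos C_pos by (intro mult_left_mono) auto
      then have "norm (cayley_orbit m (s n)) \<le> sqrt (C / c) * (q ^ m * sqrt 2) * B"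
        using q(3)[of m "s n"] by linarith
      then have "norm f * norm (cayley_orbit m (s n)) \<le> norm f * (sqrt (C / c) * (q ^ m * sqrt 2) * B)"
        by (rule mult_left_mono) simp
      then show ?thesis
        using norm_cinner_le[of f "cayley_orbit m (s n)"] by (simp add: k_def mult_ac)
    qed
    have "summable (\<lambda>n. k\<^sup>2 * (q\<^sup>2) ^ n)"
      using q(1,2) by (intro summable_mult summable_geometric) (simp add: power_less_one_iff abs_square_less_1)
    moreover have "(k * q ^ n)\<^sup>2 = k\<^sup>2 * (q\<^sup>2) ^ n" for n
      by (simp add: power_mult_distrib mult.commute flip: power_mult)
    ultimately show "(\<integral>\<^sup>+n. ennreal ((k * q ^ n)\<^sup>2) \<partial>count_space UNIV) < \<infinity>"
      by (simp add: nn_integral_count_space_nat suminf_ennreal2)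
    show "(\<lambda>n. cinner f (cayley_orbit m (s n))) \<longlonglongrightarrow> cinner f (cayley_orbit m y)" for m
      using bounded_linear.tendsto[OF bounded_clinear_bounded_linear s, of "cayley_orbit m"] diagonal_cayley_orbit[of m]
      by (intro tendsto_cinner_right) (simp add: diagonal_def)
  qed simp_all
qed

lemma orbit_integral_eq_orbit_sum_uniform:
  assumes "0 < \<delta>" and "\<And>j. \<delta> \<le> Re (lam j)"
  shows "orbit_integral f y = orbit_sum f y"
proof -
  obtain s where s: "\<And>n. s n \<in> combinations" "s \<longlonglongrightarrow> y"
    using combinations_approx_seq by blast
  have "(\<lambda>n. orbit_integral f (s n)) \<longlonglongrightarrow> orbit_sum f y"
    using tendsto_orbit_sum_uniform[OF assms s(2)] orbit_integral_eq_orbit_sum_combination[OF s(1)] by simp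
  then show ?thesis
    using tendsto_orbit_integral_uniform[OF assms s(2)] by (rule LIMSEQ_unique[rotated])
qed

lemma shifted_generator:
  assumes "0 \<le> \<epsilon>"
  shows "diagonal_generator e c C (\<lambda>x. A x - \<epsilon> *\<^sub>R x) (\<lambda>j. lam j + \<epsilon>)"
proof
  show "diagonal (\<lambda>x. A x - \<epsilon> *\<^sub>R x) (\<lambda>j. - (lam j + complex_of_real \<epsilon>))"
    using diagonal_diff[OF diagonal_A diagonal_scaleC[OF diagonal_ident, of "complex_of_real \<epsilon>"]]
    by (simp add: scaleC_of_real)
  show "Re (lam j + complex_of_real \<epsilon>) > 0" for j
    using Re_lam_pos[of j] assms by simp
qed

lemma exp_op_shift: "exp_op t (\<lambda>x. A x - \<epsilon> *\<^sub>R x) = (\<lambda>x. exp (- (t * \<epsilon>)) *\<^sub>R exp_op t A x)"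
proof (rule diagonal_unique)
  show "diagonal (exp_op t (\<lambda>x. A x - \<epsilon> *\<^sub>R x)) (\<lambda>j. exp (complex_of_real t * - (lam j + \<epsilon>)))"
    using diagonal_diff[OF diagonal_A diagonal_scaleC[OF diagonal_ident, of "complex_of_real \<epsilon>"]]
    by (intro diagonal_exp_op) (simp add: scaleC_of_real)
  have "diagonal (\<lambda>x. complex_of_real (exp (- (t * \<epsilon>))) *\<^sub>C exp_op t A x)
      (\<lambda>j. exp (complex_of_real t * - (lam j + \<epsilon>)))"
    by (rule diagonal_cong[OF diagonal_scaleC[OF diagonal_exp_op_A]])
       (simp add: algebra_simps flip: exp_of_real exp_add)
  then show "diagonal (\<lambda>x. exp (- (t * \<epsilon>)) *\<^sub>R exp_op t A x) (\<lambda>j. exp (complex_of_real t * - (lam j + \<epsilon>)))"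
    by (simp add: scaleC_of_real)
qed

lemma norm_cayley_orbit_diff_le:
  assumes gen: "diagonal_generator e c C A' lam'" and close: "\<And>j. cmod (lam' j - lam j) \<le> \<epsilon>"
  shows "norm (diagonal_generator.cayley_orbit A' n y - cayley_orbit n y)
    \<le> sqrt (C / c) * (sqrt 2 * ((2 * real n + 1) * \<epsilon>)) * norm y"
proof (rule diagonal_norm_le[OF diagonal_diff[OF diagonal_generator.diagonal_cayley_orbit[OF gen] diagonal_cayley_orbit]])
  fix j
  have "cmod (cayley (lam' j) ^ n * (1 / (1 + lam' j)) - cayley (lam j) ^ n * (1 / (1 + lam j)))
      \<le> (2 * real n + 1) * \<epsilon>"
  proof (rule order_trans[OF norm_cayley_power_div_diff_le])
    show "0 \<le> Re (lam' j)" "0 \<le> Re (lam j)"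
      using diagonal_generator.Re_lam_pos[OF gen, of j] Re_lam_pos[of j] by auto
    show "(2 * real n + 1) * cmod (lam' j - lam j) \<le> (2 * real n + 1) * \<epsilon>"
      by (intro mult_left_mono close) simp
  qed
  moreover have "cayley (lam' j) ^ n * (complex_of_real (sqrt 2) * (1 / (1 + lam' j)))
      - cayley (lam j) ^ n * (complex_of_real (sqrt 2) * (1 / (1 + lam j)))
      = complex_of_real (sqrt 2) * (cayley (lam' j) ^ n * (1 / (1 + lam' j)) - cayley (lam j) ^ n * (1 / (1 + lam j)))"
    by (simp add: algebra_simps)
  ultimately show "cmod (cayley (lam' j) ^ n * (complex_of_real (sqrt 2) * (1 / (1 + lam' j)))
      - cayley (lam j) ^ n * (complex_of_real (sqrt 2) * (1 / (1 + lam j))))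
      \<le> sqrt 2 * ((2 * real n + 1) * \<epsilon>)"
    by (simp add: norm_mult)
qed

lemma tendsto_cayley_orbit_shifted:
  assumes \<epsilon>: "\<epsilon> \<longlonglongrightarrow> 0" "\<And>k. 0 \<le> \<epsilon> k"
  shows "(\<lambda>k. diagonal_generator.cayley_orbit (\<lambda>x. A x - \<epsilon> k *\<^sub>R x) n y) \<longlonglongrightarrow> cayley_orbit n y"
proof -
  have "norm (diagonal_generator.cayley_orbit (\<lambda>x. A x - \<epsilon> k *\<^sub>R x) n y - cayley_orbit n y)
      \<le> sqrt (C / c) * (sqrt 2 * ((2 * real n + 1) * \<epsilon> k)) * norm y" for k
    by (rule norm_cayley_orbit_diff_le[OF shifted_generator[OF \<epsilon>(2)]]) (simp add: \<epsilon>(2))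
  then have "eventually (\<lambda>k. norm (diagonal_generator.cayley_orbit (\<lambda>x. A x - \<epsilon> k *\<^sub>R x) n y - cayley_orbit n y)
      \<le> sqrt (C / c) * (sqrt 2 * ((2 * real n + 1) * \<epsilon> k)) * norm y) sequentially"
    by simp
  moreover have "(\<lambda>k. sqrt (C / c) * (sqrt 2 * ((2 * real n + 1) * \<epsilon> k)) * norm y) \<longlonglongrightarrow> 0"
    by (rule tendsto_mult_left_zero[OF tendsto_mult_right_zero[OF tendsto_mult_right_zero[OF tendsto_mult_right_zero[OF \<epsilon>(1)]]]])
  ultimately have "(\<lambda>k. diagonal_generator.cayley_orbit (\<lambda>x. A x - \<epsilon> k *\<^sub>R x) n y - cayley_orbit n y) \<longlonglongrightarrow> 0"
    by (rule Lim_null_comparison)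
  then show ?thesis by (rule LIM_zero_cancel)
qed

text \<open>Shifting the spectrum by \<open>\<epsilon>\<close> makes the orbit integral smaller and the orbit sum converge, while
  the uniform case applies to the shifted generator.\<close>

lemma orbit_sum_le_orbit_integral: "orbit_sum f y \<le> orbit_integral f y"
proof -
  define \<epsilon> where "\<epsilon> k = inverse (real (Suc k))" for k
  have \<epsilon>_pos: "\<epsilon> k > 0" for k by (simp add: \<epsilon>_def)
  have gen: "diagonal_generator e c C (\<lambda>x. A x - \<epsilon> k *\<^sub>R x) (\<lambda>j. lam j + \<epsilon> k)" for k
    using shifted_generator \<epsilon>_pos less_imp_le by blast
  show ?thesis
    unfolding orbit_sum_def orbit_integral_def
  proof (rule nn_integral_le_by_approximation[where
        u="\<lambda>k n. ennreal ((cmod (cinner f (diagonal_generator.cayley_orbit (\<lambda>x. A x - \<epsilon> k *\<^sub>R x) n y)))\<^sup>2)"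
        and v="\<lambda>k t. ennreal ((cmod (cinner f (exp_op t (\<lambda>x. A x - \<epsilon> k *\<^sub>R x) y)))\<^sup>2)"])
    show "(\<lambda>k. ennreal ((cmod (cinner f (diagonal_generator.cayley_orbit (\<lambda>x. A x - \<epsilon> k *\<^sub>R x) n y)))\<^sup>2))
        \<longlonglongrightarrow> ennreal ((cmod (cinner f (cayley_orbit n y)))\<^sup>2)" for n
    proof -
      have "(\<lambda>k. diagonal_generator.cayley_orbit (\<lambda>x. A x - \<epsilon> k *\<^sub>R x) n y) \<longlonglongrightarrow> cayley_orbit n y"
        using \<epsilon>_pos LIMSEQ_inverse_real_of_nat unfolding \<epsilon>_def by (intro tendsto_cayley_orbit_shifted) (auto intro: less_imp_le)
      then show ?thesis
        by (intro tendsto_ennrealI tendsto_power tendsto_norm tendsto_cinner_right)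
    qed
    show "(\<integral>\<^sup>+n. ennreal ((cmod (cinner f (diagonal_generator.cayley_orbit (\<lambda>x. A x - \<epsilon> k *\<^sub>R x) n y)))\<^sup>2) \<partial>count_space UNIV)
        = (\<integral>\<^sup>+t. ennreal ((cmod (cinner f (exp_op t (\<lambda>x. A x - \<epsilon> k *\<^sub>R x) y)))\<^sup>2) \<partial>restrict_space lborel {0..})" for k
      using diagonal_generator.orbit_integral_eq_orbit_sum_uniform[OF gen[of k] \<epsilon>_pos[of k], where f=f and y=y] Re_lam_pos
      by (simp add: diagonal_generator.orbit_sum_def[OF gen] diagonal_generator.orbit_integral_def[OF gen] less_imp_le)
    show "ennreal ((cmod (cinner f (exp_op t (\<lambda>x. A x - \<epsilon> k *\<^sub>R x) y)))\<^sup>2) \<le> ennreal ((cmod (cinner f (exp_op t A y)))\<^sup>2)"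
      if "t \<in> space (restrict_space lborel {0..})" for k t
    proof -
      have "exp (- (t * \<epsilon> k)) \<le> 1" using that \<epsilon>_pos[of k] by simp
      then have "cmod (cinner f (exp_op t (\<lambda>x. A x - \<epsilon> k *\<^sub>R x) y)) \<le> cmod (cinner f (exp_op t A y))"
        by (simp add: exp_op_shift cinner_scaleR_right norm_scaleR mult_left_le_one_le)
      then show ?thesis by (intro ennreal_leI power_mono) auto
    qed
  qed simp
qed

text \<open>The generator whose Cayley transform is r times the Cayley transform of A.\<close>

definition rescaled_generator :: "real \<Rightarrow> 'h \<Rightarrow> 'h" where
  "rescaled_generator r = (\<lambda>x. inv (\<lambda>x. x + r *\<^sub>R cayley_op x) (r *\<^sub>R cayley_op x - x))"

lemma norm_rescaled_cayley_le: "0 \<le> r \<Longrightarrow> cmod (complex_of_real r * cayley (lam j)) \<le> r"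
  using norm_cayley_le_1[of "lam j"] Re_lam_pos[of j] by (simp add: norm_mult mult_left_le)

lemma diagonal_rescaled_generator:
  assumes r: "0 \<le> r" "r < 1"
  shows "diagonal (rescaled_generator r) (\<lambda>j. - cayley (complex_of_real r * cayley (lam j)))"
proof -
  note small = norm_rescaled_cayley_le[OF r(1)]
  have low: "1 - r \<le> cmod (1 + complex_of_real r * cayley (lam j))" for j
    using norm_triangle_ineq4[of "1 + complex_of_real r * cayley (lam j)" "complex_of_real r * cayley (lam j)"] small[of j]
    by simp
  have "diagonal (\<lambda>x. x + complex_of_real r *\<^sub>C cayley_op x) (\<lambda>j. 1 + complex_of_real r * cayley (lam j))"
    by (rule diagonal_add[OF diagonal_ident diagonal_scaleC[OF diagonal_cayley_op]])
  then have "diagonal (inv (\<lambda>x. x + r *\<^sub>R cayley_op x)) (\<lambda>j. 1 / (1 + complex_of_real r * cayley (lam j)))"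
    using diagonal_inv[OF _ _ low] r by (simp add: scaleC_of_real)
  from diagonal_compose[OF this diagonal_diff[OF diagonal_scaleC[OF diagonal_cayley_op, of "complex_of_real r"] diagonal_ident]]
  have "diagonal (rescaled_generator r)
      (\<lambda>j. 1 / (1 + complex_of_real r * cayley (lam j)) * (complex_of_real r * cayley (lam j) - 1))"
    by (simp add: rescaled_generator_def scaleC_of_real)
  moreover have "1 / (1 + w) * (w - 1) = - cayley w" for w :: complex
    unfolding cayley_def by (simp add: minus_divide_left)
  ultimately show ?thesis
    by (rule diagonal_cong)
qed

lemma Re_rescaled_eigenvalue_ge:
  assumes "0 \<le> r" "r < 1"
  shows "(1 - r\<^sup>2) / 4 \<le> Re (cayley (complex_of_real r * cayley (lam j)))"
  using norm_rescaled_cayley_le assms by (intro Re_cayley_ge) auto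

lemma rescaled_generator:
  assumes "0 \<le> r" "r < 1"
  shows "diagonal_generator e c C (rescaled_generator r) (\<lambda>j. cayley (complex_of_real r * cayley (lam j)))"
proof
  show "diagonal (rescaled_generator r) (\<lambda>j. - cayley (complex_of_real r * cayley (lam j)))"
    by (rule diagonal_rescaled_generator[OF assms])
  have "0 < (1 - r\<^sup>2) / 4"
    using assms by (simp add: power_less_one_iff abs_square_less_1)
  then show "Re (cayley (complex_of_real r * cayley (lam j))) > 0" for j
    using Re_rescaled_eigenvalue_ge[OF assms, of j] by linarith
qed

lemma cayley_orbit_rescaled:
  assumes r: "0 \<le> r" "r < 1"
  shows "diagonal_generator.cayley_orbit (rescaled_generator r) n (resolvent y - rescaled_generator r (resolvent y))
    = (r ^ n) *\<^sub>R cayley_orbit n y"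
proof -
  note gen = rescaled_generator[OF r]
  define \<mu> where "\<mu> j = cayley (complex_of_real r * cayley (lam j))" for j
  have "(\<lambda>y. diagonal_generator.cayley_orbit (rescaled_generator r) n (resolvent y - rescaled_generator r (resolvent y)))
      = (\<lambda>y. complex_of_real (r ^ n) *\<^sub>C cayley_orbit n y)"
  proof (rule diagonal_unique)
    show "diagonal (\<lambda>y. complex_of_real (r ^ n) *\<^sub>C cayley_orbit n y)
        (\<lambda>j. complex_of_real (r ^ n) * (cayley (lam j) ^ n * (complex_of_real (sqrt 2) * (1 / (1 + lam j)))))"
      by (rule diagonal_scaleC[OF diagonal_cayley_orbit])
    have "1 + \<mu> j \<noteq> 0" for j
      using one_plus_neq_zero diagonal_generator.Re_lam_pos[OF gen] by (simp add: \<mu>_def less_imp_le)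
    moreover have "1 + complex_of_real r * cayley (lam j) \<noteq> 0" for j
    proof
      assume "1 + complex_of_real r * cayley (lam j) = 0"
      then have "cmod (complex_of_real r * cayley (lam j)) = 1"
        by (metis add.inverse_unique norm_minus_cancel norm_one)
      then show False using norm_rescaled_cayley_le[OF r(1), of j] r(2) by simp
    qed
    ultimately have mult_eq: "cayley (\<mu> j) ^ n * (complex_of_real (sqrt 2) * (1 / (1 + \<mu> j))) * ((1 + \<mu> j) * (1 / (1 + lam j)))
        = complex_of_real (r ^ n) * (cayley (lam j) ^ n * (complex_of_real (sqrt 2) * (1 / (1 + lam j))))" for j
      by (simp add: \<mu>_def cayley_cayley power_mult_distrib)
    show "diagonal (\<lambda>y. diagonal_generator.cayley_orbit (rescaled_generator r) n (resolvent y - rescaled_generator r (resolvent y)))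
        (\<lambda>j. complex_of_real (r ^ n) * (cayley (lam j) ^ n * (complex_of_real (sqrt 2) * (1 / (1 + lam j)))))"
      by (rule diagonal_cong[OF diagonal_compose[OF diagonal_generator.diagonal_cayley_orbit[OF gen]
          diagonal_compose[OF diagonal_generator.diagonal_one_minus_A[OF gen] diagonal_resolvent]]])
         (use mult_eq in \<open>simp add: \<mu>_def\<close>)
  qed
  then show ?thesis by (drule_tac fun_cong[of _ _ y]) (simp only: scaleC_of_real)
qed

lemma tendsto_exp_op_rescaled:
  assumes \<rho>: "\<rho> \<longlonglongrightarrow> 0" "\<And>k. 0 < \<rho> k" "\<And>k. \<rho> k < 1" and t: "0 \<le> t"
  shows "(\<lambda>k. exp_op t (rescaled_generator (1 - \<rho> k)) (resolvent y - rescaled_generator (1 - \<rho> k) (resolvent y)))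
    \<longlonglongrightarrow> exp_op t A y"
proof -
  obtain K where K: "K > 0" "\<And>j. cmod (lam j) \<le> K"
    using diagonal_eigenvalues_bounded[OF diagonal_A] by auto
  define A' where "A' k = rescaled_generator (1 - \<rho> k)" for k
  define b where "b k = \<rho> k * (1 + K)\<^sup>2 * (2 * t * (1 + K) + 1)" for k
  have gen: "diagonal_generator e c C (A' k) (\<lambda>j. cayley (complex_of_real (1 - \<rho> k) * cayley (lam j)))" for k
    unfolding A'_def using \<rho>(2,3)[of k] by (intro rescaled_generator) auto
  have "eventually (\<lambda>k. \<rho> k < 1 / (1 + K)) sequentially"
    using order_tendstoD(2)[OF \<rho>(1), of "1 / (1 + K)"] K(1) by simp
  then have "eventually (\<lambda>k. norm (exp_op t (A' k) (resolvent y - A' k (resolvent y)) - exp_op t A y)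
      \<le> sqrt (C / c) * b k * norm y) sequentially"
  proof (rule eventually_mono)
    fix k assume "\<rho> k < 1 / (1 + K)"
    then have small: "\<rho> k * (1 + K) \<le> 1" using K(1) by (simp add: field_simps)
    show "norm (exp_op t (A' k) (resolvent y - A' k (resolvent y)) - exp_op t A y) \<le> sqrt (C / c) * b k * norm y"
      unfolding b_def
      by (rule diagonal_norm_le[OF diagonal_diff[OF diagonal_compose[OF
            diagonal_generator.diagonal_exp_op_A[OF gen]
            diagonal_compose[OF diagonal_generator.diagonal_one_minus_A[OF gen] diagonal_resolvent]]
            diagonal_exp_op_A]])
         (rule norm_rescaled_multiplier_diff_le[OF Re_lam_pos K(2) \<rho>(2) small t])
  qed
  moreover have "(\<lambda>k. sqrt (C / c) * b k * norm y) \<longlonglongrightarrow> 0"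
    unfolding b_def by (intro tendsto_mult_left_zero tendsto_mult_right_zero \<rho>(1))
  ultimately have "(\<lambda>k. exp_op t (A' k) (resolvent y - A' k (resolvent y)) - exp_op t A y) \<longlonglongrightarrow> 0"
    by (rule Lim_null_comparison)
  then show ?thesis unfolding A'_def by (rule LIM_zero_cancel)
qed

text \<open>Rescaling the Cayley transform by r < 1 makes the orbit sum smaller (by the factors r^n),
  while the orbit integral of the correspondingly transformed vector converges.\<close>

lemma orbit_integral_le_orbit_sum: "orbit_integral f y \<le> orbit_sum f y"
proof -
  define \<rho> where "\<rho> k = inverse (real (Suc (Suc k)))" for k
  define A' where "A' k = rescaled_generator (1 - \<rho> k)" for k
  define y' where "y' k = resolvent y - A' k (resolvent y)" for k
  have \<rho>_pos: "0 < \<rho> k" for k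
    by (simp add: \<rho>_def)
  have \<rho>_lt: "\<rho> k < 1" for k
    unfolding \<rho>_def by (rule inverse_less_1_iff[THEN iffD2, OF disjI2]) simp
  have \<rho>_lim: "\<rho> \<longlonglongrightarrow> 0"
    unfolding \<rho>_def by (rule LIMSEQ_Suc[OF LIMSEQ_inverse_real_of_nat])
  have r: "0 \<le> 1 - \<rho> k" "1 - \<rho> k < 1" for k
    using \<rho>_pos[of k] \<rho>_lt[of k] by auto
  have gen: "diagonal_generator e c C (A' k) (\<lambda>j. cayley (complex_of_real (1 - \<rho> k) * cayley (lam j)))" for k
    unfolding A'_def by (rule rescaled_generator[OF r])
  show ?thesis
    unfolding orbit_integral_def orbit_sum_def
  proof (rule nn_integral_le_by_approximation[where
        u="\<lambda>k t. ennreal ((cmod (cinner f (exp_op t (A' k) (y' k))))\<^sup>2)"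
        and v="\<lambda>k n. ennreal ((cmod (cinner f (diagonal_generator.cayley_orbit (A' k) n (y' k))))\<^sup>2)"])
    show "(\<lambda>t. ennreal ((cmod (cinner f (exp_op t (A' k) (y' k))))\<^sup>2)) \<in> borel_measurable (restrict_space lborel {0..})" for k
    proof -
      have [measurable]: "(\<lambda>t. cinner f (exp_op t (A' k) (y' k))) \<in> borel_measurable borel"
        by (rule diagonal_generator.measurable_cinner_exp_op[OF gen])
      show ?thesis by (intro measurable_restrict_space1) simp
    qed
    show "(\<lambda>k. ennreal ((cmod (cinner f (exp_op t (A' k) (y' k))))\<^sup>2)) \<longlonglongrightarrow> ennreal ((cmod (cinner f (exp_op t A y)))\<^sup>2)"
      if "t \<in> space (restrict_space lborel {0..})" for t
      using tendsto_exp_op_rescaled[OF \<rho>_lim \<rho>_pos \<rho>_lt, of t y] that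
      unfolding A'_def y'_def by (intro tendsto_ennrealI tendsto_intros tendsto_cinner_right) simp
    show "(\<integral>\<^sup>+t. ennreal ((cmod (cinner f (exp_op t (A' k) (y' k))))\<^sup>2) \<partial>restrict_space lborel {0..})
        = (\<integral>\<^sup>+n. ennreal ((cmod (cinner f (diagonal_generator.cayley_orbit (A' k) n (y' k))))\<^sup>2) \<partial>count_space UNIV)" for k
    proof -
      have "0 < (1 - (1 - \<rho> k)\<^sup>2) / 4"
        using r[of k] \<rho>_pos[of k] by (simp add: power_less_one_iff abs_square_less_1)
      from diagonal_generator.orbit_integral_eq_orbit_sum_uniform[OF gen this Re_rescaled_eigenvalue_ge[OF r]]
      show ?thesis
        by (simp add: diagonal_generator.orbit_integral_def[OF gen] diagonal_generator.orbit_sum_def[OF gen])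
    qed
    show "ennreal ((cmod (cinner f (diagonal_generator.cayley_orbit (A' k) n (y' k))))\<^sup>2)
        \<le> ennreal ((cmod (cinner f (cayley_orbit n y)))\<^sup>2)" for k n
    proof -
      have "cmod (cinner f (diagonal_generator.cayley_orbit (A' k) n (y' k))) = (1 - \<rho> k) ^ n * cmod (cinner f (cayley_orbit n y))"
        using r[of k] unfolding A'_def y'_def cayley_orbit_rescaled[OF r]
        by (simp add: cinner_scaleR_right norm_scaleR)
      also have "\<dots> \<le> cmod (cinner f (cayley_orbit n y))"
        using r[of k] by (intro mult_left_le_one_le power_le_one) auto
      finally show ?thesis by (intro ennreal_leI power_mono) auto
    qed
  qed
qed

lemma orbit_integral_eq_orbit_sum: "orbit_integral f y = orbit_sum f y"
  using orbit_integral_le_orbit_sum orbit_sum_le_orbit_integral by (rule antisym)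

end

section \<open>The frame characterisation\<close>

lemma nn_integral_count_space_prod:
  "(\<integral>\<^sup>+ i. (\<integral>\<^sup>+ n. G (i, n) \<partial>count_space UNIV) \<partial>count_space I)
   = (\<integral>\<^sup>+ k. G k \<partial>count_space (I \<times> (UNIV :: 'b set)))"
proof -
  have "(\<integral>\<^sup>+ i. (\<integral>\<^sup>+ n. G (i, n) \<partial>count_space UNIV) \<partial>count_space I)
      = (\<integral>\<^sup>+ i. (\<integral>\<^sup>+ n. G (i, n) \<partial>count_space UNIV) * indicator I i \<partial>count_space UNIV)"
    by (rule nn_integral_count_space_indicator) simp
  also have "\<dots> = (\<integral>\<^sup>+ i. (\<integral>\<^sup>+ (n::'b). G (i, n) * indicator (I \<times> UNIV) (i, n) \<partial>count_space UNIV) \<partial>count_space UNIV)"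
    by (intro nn_integral_cong) (simp add: nn_integral_multc[symmetric] indicator_def)
  also have "\<dots> = (\<integral>\<^sup>+ k. G k * indicator (I \<times> UNIV) k \<partial>count_space UNIV)"
    by (rule nn_integral_fst_count_space)
  also have "\<dots> = (\<integral>\<^sup>+ k. G k \<partial>count_space (I \<times> (UNIV :: 'b set)))"
    by (rule nn_integral_count_space_indicator[symmetric]) simp
  finally show ?thesis .
qed

theorem mainTheorem10:
  fixes A :: "'h::{chilbert_space, second_countable_topology} \<Rightarrow> 'h"
    and e :: "'j \<Rightarrow> 'h" and lam :: "'j \<Rightarrow> complex"
    and I :: "'i set" and g :: "'i \<Rightarrow> 'h"
  assumes "bounded_clinear A"
    and "riesz_basis e"
    and "\<And>j. A (e j) = (- lam j) *\<^sub>C e j"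
    and "\<And>j. Re (lam j) > 0"
    and "countable I"
  shows "semi_continuous_frame A g I {0..} \<longleftrightarrow>
    (let R = inv (\<lambda>x. x - A x);
         a = (\<lambda>i. sqrt 2 *\<^sub>R R (g i));
         B = (\<lambda>x. R x + A (R x))
     in is_frame (\<lambda>(i, n). (B ^^ n) (a i)) (I \<times> (UNIV :: nat set)))"
proof -
  obtain c C where rb: "riesz_bounds e c C"
    using riesz_basis_imp_riesz_bounds[OF assms(2)] by blast
  interpret diagonal_generator e c C A lam
    using rb assms(1,3,4)
    by (intro diagonal_generator.intro diagonal_generator_axioms.intro) (simp_all add: riesz_bounds.diagonal_def)
  have "(\<integral>\<^sup>+ i. orbit_integral f (g i) \<partial>count_space I)
      = (\<integral>\<^sup>+ k. ennreal ((cmod (cinner f ((\<lambda>(i, n). (cayley_op ^^ n) (sqrt 2 *\<^sub>R resolvent (g i))) k)))\<^sup>2)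
          \<partial>count_space (I \<times> (UNIV :: nat set)))" for f
    unfolding orbit_integral_eq_orbit_sum orbit_sum_def cayley_orbit_def
    using nn_integral_count_space_prod[where G="\<lambda>k. ennreal ((cmod (cinner f
      ((\<lambda>(i, n). (cayley_op ^^ n) (sqrt 2 *\<^sub>R resolvent (g i))) k)))\<^sup>2)" and I=I] by simp
  then show ?thesis
    using assms(5)
    unfolding Let_def semi_continuous_frame_def is_frame_def orbit_integral_eq_set_nn_integral
      resolvent_def[symmetric] cayley_op_def[symmetric]
    by simp
qed

end
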